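(* For every graph $G$, $\operatorname{smw}(G)\le\operatorname{tw}(G)+1$, where $\operatorname{tw}$ denotes treewidth. Moreover, for every class of graphs of bounded sm-width, the clique-width is bounded on that class.
   Context: A split of $G$ is a partition $(V_1,V_2)$ of $V(G)$ with $|V_1|,|V_2|\ge2$ such that every vertex of $V_1$ with a neighbour in $V_2$ has the same neighbourhood in $V_2$. $\operatorname{mm}(A)$ is the maximum size of a matching among edges between $A$ and $V(G)\setminus A$; $\operatorname{sm}(A)=1$ if $(A,V(G)\setminus A)$ is a split, else $\operatorname{mm}(A)$. A branch decomposition of $G$: tree of max degree 3 with a bijection from leaves to $V(G)$; each tree edge $e$ induces the cut given by leaf-images of the two components of $T-e$. $\operatorname{smw}(G)$ is the minimum over branch decompositions of the maximum of $\operatorname{sm}$ over induced cuts. *)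

theory Defs
  imports Main
begin

definition graph :: "'a set \<Rightarrow> ('a \<Rightarrow> 'a \<Rightarrow> bool) \<Rightarrow> bool" where
  "graph V E \<longleftrightarrow> finite V \<and> (\<forall>x y. E x y \<longrightarrow> E y x) \<and> (\<forall>x. \<not> E x x)
     \<and> (\<forall>x y. E x y \<longrightarrow> x \<in> V \<and> y \<in> V)"

definition tree_conn :: "nat set set \<Rightarrow> nat set \<Rightarrow> bool" where
  "tree_conn TE S \<longleftrightarrow>
     (\<forall>x\<in>S. \<forall>y\<in>S. (x, y) \<in> {(u, w). {u, w} \<in> TE \<and> u \<in> S \<and> w \<in> S}\<^sup>*)"

definition is_tree :: "nat set \<Rightarrow> nat set set \<Rightarrow> bool" where
  "is_tree N TE \<longleftrightarrow> finite N
     \<and> (\<forall>e\<in>TE. \<exists>u v. u \<in> N \<and> v \<in> N \<and> u \<noteq> v \<and> e = {u, v})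
     \<and> tree_conn TE N
     \<and> (N = {} \<longrightarrow> TE = {})
     \<and> (N \<noteq> {} \<longrightarrow> card TE + 1 = card N)"

definition tdegree :: "nat set set \<Rightarrow> nat \<Rightarrow> nat" where
  "tdegree TE x = card {e \<in> TE. x \<in> e}"

definition tleaves :: "nat set \<Rightarrow> nat set set \<Rightarrow> nat set" where
  "tleaves N TE = {x \<in> N. tdegree TE x \<le> 1}"

text \<open>Nodes of the component of T - {a,b} containing a.\<close>
definition tcomp :: "nat set set \<Rightarrow> nat \<Rightarrow> nat \<Rightarrow> nat set" where
  "tcomp TE a b = {x. (a, x) \<in> {(u, w). {u, w} \<in> TE - {{a, b}}}\<^sup>*}"

definition is_split :: "'a set \<Rightarrow> ('a \<Rightarrow> 'a \<Rightarrow> bool) \<Rightarrow> 'a set \<Rightarrow> 'a set \<Rightarrow> bool" where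
  "is_split V E V1 V2 \<longleftrightarrow> V1 \<union> V2 = V \<and> V1 \<inter> V2 = {} \<and> card V1 \<ge> 2 \<and> card V2 \<ge> 2
     \<and> (\<forall>x\<in>V1. \<forall>y\<in>V1. (\<exists>z\<in>V2. E x z) \<longrightarrow> (\<exists>z\<in>V2. E y z) \<longrightarrow>
          {z \<in> V2. E x z} = {z \<in> V2. E y z})"

text \<open>Maximum size of a matching among edges between A and V - A
 (an edge is represented by the ordered pair (endpoint in A, endpoint outside A)).\<close>
definition mm :: "'a set \<Rightarrow> ('a \<Rightarrow> 'a \<Rightarrow> bool) \<Rightarrow> 'a set \<Rightarrow> nat" where
  "mm V E A = Max {card M | M. M \<subseteq> {(u, v). u \<in> A \<and> v \<in> V - A \<and> E u v}
                               \<and> inj_on fst M \<and> inj_on snd M}"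

definition sm :: "'a set \<Rightarrow> ('a \<Rightarrow> 'a \<Rightarrow> bool) \<Rightarrow> 'a set \<Rightarrow> nat" where
  "sm V E A = (if is_split V E A (V - A) then 1 else mm V E A)"

definition branch_decomp :: "'a set \<Rightarrow> nat set \<Rightarrow> nat set set \<Rightarrow> (nat \<Rightarrow> 'a) \<Rightarrow> bool" where
  "branch_decomp V N TE f \<longleftrightarrow> is_tree N TE \<and> (\<forall>x\<in>N. tdegree TE x \<le> 3)
     \<and> bij_betw f (tleaves N TE) V"

text \<open>Maximum of sm over the cuts induced by tree edges (0 if there are no tree edges).\<close>
definition bd_sm_width :: "'a set \<Rightarrow> ('a \<Rightarrow> 'a \<Rightarrow> bool) \<Rightarrow> nat set \<Rightarrow> nat set set \<Rightarrow> (nat \<Rightarrow> 'a) \<Rightarrow> nat" where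
  "bd_sm_width V E N TE f =
     Sup {sm V E (f ` (tleaves N TE \<inter> tcomp TE a b)) | a b. {a, b} \<in> TE}"

definition smw :: "'a set \<Rightarrow> ('a \<Rightarrow> 'a \<Rightarrow> bool) \<Rightarrow> nat" where
  "smw V E = (LEAST k. \<exists>N TE f. branch_decomp V N TE f \<and> bd_sm_width V E N TE f = k)"

definition tree_decomp :: "'a set \<Rightarrow> ('a \<Rightarrow> 'a \<Rightarrow> bool) \<Rightarrow> nat set \<Rightarrow> nat set set \<Rightarrow> (nat \<Rightarrow> 'a set) \<Rightarrow> bool" where
  "tree_decomp V E N TE B \<longleftrightarrow> is_tree N TE \<and> N \<noteq> {}
     \<and> (\<forall>x\<in>N. B x \<subseteq> V) \<and> (\<Union>x\<in>N. B x) = V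
     \<and> (\<forall>u v. E u v \<longrightarrow> (\<exists>x\<in>N. u \<in> B x \<and> v \<in> B x))
     \<and> (\<forall>v\<in>V. tree_conn TE {x \<in> N. v \<in> B x})"

definition treewidth :: "'a set \<Rightarrow> ('a \<Rightarrow> 'a \<Rightarrow> bool) \<Rightarrow> int" where
  "treewidth V E = int (LEAST k. \<exists>N TE B. tree_decomp V E N TE B \<and> Max (card ` B ` N) = k) - 1"

datatype 'a cwexp = CVert 'a nat | CUnion "'a cwexp" "'a cwexp"
  | CRelab nat nat "'a cwexp" | CJoin nat nat "'a cwexp"

fun cw_verts :: "'a cwexp \<Rightarrow> 'a set" where
  "cw_verts (CVert v i) = {v}"
| "cw_verts (CUnion e1 e2) = cw_verts e1 \<union> cw_verts e2"
| "cw_verts (CRelab i j e) = cw_verts e"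
| "cw_verts (CJoin i j e) = cw_verts e"

fun cw_lab :: "'a cwexp \<Rightarrow> 'a \<Rightarrow> nat" where
  "cw_lab (CVert v i) = (\<lambda>x. i)"
| "cw_lab (CUnion e1 e2) = (\<lambda>x. if x \<in> cw_verts e1 then cw_lab e1 x else cw_lab e2 x)"
| "cw_lab (CRelab i j e) = (\<lambda>x. if cw_lab e x = i then j else cw_lab e x)"
| "cw_lab (CJoin i j e) = cw_lab e"

fun cw_edges :: "'a cwexp \<Rightarrow> 'a \<Rightarrow> 'a \<Rightarrow> bool" where
  "cw_edges (CVert v i) = (\<lambda>x y. False)"
| "cw_edges (CUnion e1 e2) = (\<lambda>x y. cw_edges e1 x y \<or> cw_edges e2 x y)"
| "cw_edges (CRelab i j e) = cw_edges e"
| "cw_edges (CJoin i j e) = (\<lambda>x y. cw_edges e x y \<or>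
      (x \<in> cw_verts e \<and> y \<in> cw_verts e \<and>
       ((cw_lab e x = i \<and> cw_lab e y = j) \<or> (cw_lab e x = j \<and> cw_lab e y = i))))"

fun cw_ok :: "nat \<Rightarrow> 'a cwexp \<Rightarrow> bool" where
  "cw_ok k (CVert v i) \<longleftrightarrow> i < k"
| "cw_ok k (CUnion e1 e2) \<longleftrightarrow> cw_ok k e1 \<and> cw_ok k e2 \<and> cw_verts e1 \<inter> cw_verts e2 = {}"
| "cw_ok k (CRelab i j e) \<longleftrightarrow> i < k \<and> j < k \<and> cw_ok k e"
| "cw_ok k (CJoin i j e) \<longleftrightarrow> i < k \<and> j < k \<and> i \<noteq> j \<and> cw_ok k e"

definition cliquewidth :: "'a set \<Rightarrow> ('a \<Rightarrow> 'a \<Rightarrow> bool) \<Rightarrow> nat" where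
  "cliquewidth V E = (if V = {} then 0 else
     (LEAST k. \<exists>e. cw_ok k e \<and> cw_verts e = V \<and> cw_edges e = E))"

end

theory Submission
  imports Defs
begin

(* Part 1, smw G <= tw G + 1.  Fix a tree decomposition with bags of size at most w = tw + 1.
   For a tree edge (c,t), let "below c t" be the vertices in bags on the side of c that are
   not in B t.  Recursively along the tree we build a binary tree with leaf set V (a hierarchy)
   in which every subtree has as leaf set a union of some sets below c t and some vertices of
   B t.  Every edge leaving such a set has an endpoint in B t, so the cut has no matching larger
   than |B t| <= w.  A binary tree with distinct leaves is laid out as a branch decomposition
   whose cuts are exactly its subtree leaf sets and their complements; since sm <= max 1 mm
   and mm is symmetric, smw <= w.

   If sm(X) <= k, the vertices of X fall
   into at most D = 2^k + k + 2 classes according to their neighbourhood outside X (for a split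
   at most 2; otherwise a maximum matching M of the cut leaves all other neighbourhoods inside
   the matched outside vertices).  Walking up an optimal branch decomposition, we build for
   each side X of a tree edge a (3D)-expression of G[X] whose labels, all below D, refine these
   classes; two siblings are combined by shifting labels, joining across, and relabelling by
   the classes of the union. *)

section \<open>Components of finite trees\<close>

definition edge_rel :: "nat set set \<Rightarrow> (nat \<times> nat) set" where
  "edge_rel F = {(u,w). {u,w} \<in> F}"

lemma edge_rel_iff [simp]: "(u,w) \<in> edge_rel F \<longleftrightarrow> {u,w} \<in> F"
  by (simp add: edge_rel_def)

lemma edge_rel_mono: "F \<subseteq> G \<Longrightarrow> edge_rel F \<subseteq> edge_rel G"
  by (auto simp: edge_rel_def)

lemma sym_edge_rel: "sym (edge_rel F)"
  by (auto simp: sym_def edge_rel_def insert_commute)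

lemma reach_sym: "(x,y) \<in> (edge_rel F)\<^sup>* \<Longrightarrow> (y,x) \<in> (edge_rel F)\<^sup>*"
  using sym_rtrancl[OF sym_edge_rel] by (auto simp: sym_def)

lemma reach_mono: "(x,y) \<in> (edge_rel F)\<^sup>* \<Longrightarrow> F \<subseteq> G \<Longrightarrow> (x,y) \<in> (edge_rel G)\<^sup>*"
  using rtrancl_mono[OF edge_rel_mono] by blast

lemma tcomp_reach: "tcomp TE a b = {x. (a,x) \<in> (edge_rel (TE - {{a,b}}))\<^sup>*}"
  by (simp add: tcomp_def edge_rel_def)

lemma tcomp_self: "a \<in> tcomp TE a b"
  by (simp add: tcomp_reach)

lemma tree_conn_reach: "tree_conn TE S \<longleftrightarrow> (\<forall>x\<in>S. \<forall>y\<in>S. (x,y) \<in> (edge_rel TE \<inter> S \<times> S)\<^sup>*)"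
proof -
  have "{(u, w). {u, w} \<in> TE \<and> u \<in> S \<and> w \<in> S} = edge_rel TE \<inter> S \<times> S" by auto
  then show ?thesis by (simp add: tree_conn_def)
qed

lemma path_leaves_set:
  assumes "(r,y) \<in> R\<^sup>*" "r \<in> S" "y \<notin> S"
  shows "\<exists>u z. (u,z) \<in> R \<and> u \<in> S \<and> z \<notin> S"
proof (rule ccontr)
  assume closed: "\<not> ?thesis"
  have "y \<in> S" using assms(1,2)
    by (induction rule: rtrancl_induct) (use closed in blast)+
  then show False using assms(3) by simp
qed

definition proper_edges :: "nat set \<Rightarrow> nat set set \<Rightarrow> bool" where
  "proper_edges N TE \<longleftrightarrow> (\<forall>e\<in>TE. \<exists>u v. u \<in> N \<and> v \<in> N \<and> u \<noteq> v \<and> e = {u, v})"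

lemma is_treeD:
  assumes "is_tree N TE"
  shows "finite N" "proper_edges N TE" "tree_conn TE N" "N \<noteq> {} \<Longrightarrow> card TE + 1 = card N"
  using assms by (auto simp: is_tree_def proper_edges_def)

lemma proper_edge: "proper_edges N TE \<Longrightarrow> {u,w} \<in> TE \<Longrightarrow> u \<in> N \<and> w \<in> N \<and> u \<noteq> w"
  unfolding proper_edges_def by (metis doubleton_eq_iff)

lemma proper_edges_subset: "proper_edges N TE \<Longrightarrow> e \<in> TE \<Longrightarrow> e \<subseteq> N"
  unfolding proper_edges_def by fastforce

lemma proper_edges_finite: "finite N \<Longrightarrow> proper_edges N TE \<Longrightarrow> finite TE"
  by (meson Pow_iff finite_Pow_iff proper_edges_subset rev_finite_subset subsetI)

lemma reach_in_nodes:
  assumes "proper_edges N TE" "F \<subseteq> TE" "(a,x) \<in> (edge_rel F)\<^sup>*" "a \<in> N"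
  shows "x \<in> N"
  using assms(3,4)
proof (induction rule: rtrancl_induct)
  case (step y z) then show ?case using proper_edge[OF assms(1)] assms(2) by auto
qed

lemma tcomp_subset:
  assumes "is_tree N TE" "a \<in> N" shows "tcomp TE a b \<subseteq> N"
  using reach_in_nodes[OF is_treeD(2)[OF assms(1)], of "TE - {{a,b}}" a] assms(2)
  by (auto simp: tcomp_reach)

text \<open>A connected graph on n vertices has at least n - 1 edges: grow a connected vertex set
  S around r one vertex at a time, gaining at least one edge inside S at each step.\<close>
lemma connected_card_le:
  assumes fin: "finite N" and ok: "proper_edges N TE" and conn: "tree_conn TE N" and r: "r \<in> N"
  shows "card N \<le> card TE + 1"
proof -
  have finTE: "finite TE" using proper_edges_finite[OF fin ok] .
  have grow: "k < card N \<Longrightarrow> \<exists>S \<subseteq> N. r \<in> S \<and> card S = Suc k \<and> k \<le> card {e\<in>TE. e \<subseteq> S}" for k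
  proof (induction k)
    case 0
    show ?case using r by (intro exI[of _ "{r}"]) auto
  next
    case (Suc k)
    then obtain S where S: "S \<subseteq> N" "r \<in> S" "card S = Suc k" "k \<le> card {e\<in>TE. e \<subseteq> S}" by auto
    have "S \<noteq> N" using S(3) Suc.prems by auto
    then obtain y where y: "y \<in> N" "y \<notin> S" using S(1) by auto
    have "(r,y) \<in> (edge_rel TE \<inter> N \<times> N)\<^sup>*" using conn r y(1) by (simp add: tree_conn_reach)
    then obtain u z where uz: "(u,z) \<in> edge_rel TE \<inter> N \<times> N" "u \<in> S" "z \<notin> S"
      using path_leaves_set[of r y _ S] S(2) y(2) by blast
    have finS: "finite S" using S(1) fin finite_subset by blast
    let ?S = "insert z S"
    have "insert {u,z} {e\<in>TE. e \<subseteq> S} \<subseteq> {e\<in>TE. e \<subseteq> ?S}" using uz by auto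
    moreover have "{u,z} \<notin> {e\<in>TE. e \<subseteq> S}" using uz by auto
    moreover have "finite {e\<in>TE. e \<subseteq> ?S}" using finTE by auto
    ultimately have "card (insert {u,z} {e\<in>TE. e \<subseteq> S}) \<le> card {e\<in>TE. e \<subseteq> ?S}"
      "card (insert {u,z} {e\<in>TE. e \<subseteq> S}) = Suc (card {e\<in>TE. e \<subseteq> S})"
      by (simp_all only: card_mono) (simp add: finTE)
    then have "Suc k \<le> card {e\<in>TE. e \<subseteq> ?S}" using S(4) by linarith
    then show ?case using S uz finS by (intro exI[of _ ?S]) auto
  qed
  have "card N > 0" using r fin by (auto simp: card_gt_0_iff)
  then obtain S where S: "S \<subseteq> N" "card S = card N" "card N - 1 \<le> card {e\<in>TE. e \<subseteq> S}"
    using grow[of "card N - 1"] by auto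
  then have "S = N" using fin card_subset_eq by blast
  then have "{e\<in>TE. e \<subseteq> S} = TE" using proper_edges_subset[OF ok] by auto
  then show ?thesis using S(3) by simp
qed

text \<open>In a tree no edge is bypassed: removing it disconnects its endpoints (otherwise the
  remaining graph would be connected with too few edges).\<close>
lemma tree_edge_separates:
  assumes T: "is_tree N TE" and e: "{a,b} \<in> TE"
  shows "(a,b) \<notin> (edge_rel (TE - {{a,b}}))\<^sup>*"
proof
  assume ab: "(a,b) \<in> (edge_rel (TE - {{a,b}}))\<^sup>*"
  let ?F = "TE - {{a,b}}"
  have ok: "proper_edges N TE" and fin: "finite N" using is_treeD[OF T] by auto
  have okF: "proper_edges N ?F" using ok by (auto simp: proper_edges_def)
  have aN: "a \<in> N" using proper_edge[OF ok e] by auto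
  have bypass: "edge_rel TE \<subseteq> (edge_rel ?F)\<^sup>*"
  proof
    fix p assume p: "p \<in> edge_rel TE"
    obtain u w where [simp]: "p = (u,w)" by (cases p)
    show "p \<in> (edge_rel ?F)\<^sup>*"
    proof (cases "{u,w} = {a,b}")
      case True
      then have "(u,w) = (a,b) \<or> (u,w) = (b,a)" by (simp add: doubleton_eq_iff)
      then show ?thesis using ab reach_sym[OF ab] by auto
    next
      case False
      then have "(u,w) \<in> edge_rel ?F" using p by simp
      then show ?thesis by (simp add: r_into_rtrancl)
    qed
  qed
  have "tree_conn ?F N"
  proof -
    have "(x,y) \<in> (edge_rel ?F \<inter> N \<times> N)\<^sup>*" if "x \<in> N" "y \<in> N" for x y
    proof -
      have "(x,y) \<in> (edge_rel TE)\<^sup>*"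
        using is_treeD(3)[OF T] that rtrancl_mono[of "edge_rel TE \<inter> N \<times> N"]
        by (auto simp: tree_conn_reach)
      then have "(x,y) \<in> (edge_rel ?F)\<^sup>*" using rtrancl_subset_rtrancl[OF bypass] by blast
      moreover have "edge_rel ?F \<inter> N \<times> N = edge_rel ?F" using proper_edge[OF okF] by auto
      ultimately show ?thesis by simp
    qed
    then show ?thesis by (simp add: tree_conn_reach)
  qed
  from connected_card_le[OF fin okF this aN] have "card N \<le> card ?F + 1" .
  moreover have "card ?F = card TE - 1" "card TE > 0"
    using e proper_edges_finite[OF fin ok] by (auto simp: card_gt_0_iff)
  moreover have "card TE + 1 = card N" using is_treeD(4)[OF T] aN by auto
  ultimately show False by linarith
qed

lemma tcomp_excludes_other_end:
  "is_tree N TE \<Longrightarrow> {a,b} \<in> TE \<Longrightarrow> b \<notin> tcomp TE a b"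
  using tree_edge_separates by (simp add: tcomp_reach)

lemma tcomp_partition:
  assumes T: "is_tree N TE" and e: "{a,b} \<in> TE"
  shows "tcomp TE a b \<inter> tcomp TE b a = {}" "tcomp TE a b \<union> tcomp TE b a = N"
proof -
  let ?R = "edge_rel (TE - {{a,b}})"
  have ab: "a \<in> N" "b \<in> N" using proper_edge[OF is_treeD(2)[OF T] e] by auto
  have ba: "tcomp TE b a = {x. (b,x) \<in> ?R\<^sup>*}" by (simp add: tcomp_reach insert_commute)
  show "tcomp TE a b \<inter> tcomp TE b a = {}"
  proof (rule ccontr)
    assume "tcomp TE a b \<inter> tcomp TE b a \<noteq> {}"
    then obtain x where "(a,x) \<in> ?R\<^sup>*" "(b,x) \<in> ?R\<^sup>*" using ba by (auto simp: tcomp_reach)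
    then have "(a,b) \<in> ?R\<^sup>*" using reach_sym by (meson rtrancl_trans)
    then show False using tree_edge_separates[OF T e] by simp
  qed
  have "x \<in> tcomp TE a b \<union> tcomp TE b a" if x: "x \<in> N" for x
  proof -
    have "(a,x) \<in> (edge_rel TE \<inter> N \<times> N)\<^sup>*" using is_treeD(3)[OF T] ab(1) x by (simp add: tree_conn_reach)
    then show ?thesis
    proof (induction rule: rtrancl_induct)
      case (step y z)
      show ?case
      proof (cases "{y,z} = {a,b}")
        case True
        then have "z = a \<or> z = b" by (auto simp: doubleton_eq_iff)
        then show ?thesis by (auto simp: tcomp_self)
      next
        case False
        then have yz: "(y,z) \<in> ?R" using step(2) by simp
        from step(3) show ?thesis
        proof
          assume "y \<in> tcomp TE a b"
          then have "(a,z) \<in> ?R\<^sup>*" using yz by (simp add: tcomp_reach rtrancl_into_rtrancl)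
          then show ?thesis by (simp add: tcomp_reach)
        next
          assume "y \<in> tcomp TE b a"
          then have "(b,z) \<in> ?R\<^sup>*" using yz ba by (simp add: rtrancl_into_rtrancl)
          then show ?thesis using ba by simp
        qed
      qed
    qed (simp add: tcomp_self)
  qed
  then show "tcomp TE a b \<union> tcomp TE b a = N"
    using tcomp_subset[OF T ab(1), of b] tcomp_subset[OF T ab(2), of a] by blast
qed

definition tnbrs :: "nat set set \<Rightarrow> nat \<Rightarrow> nat set" where
  "tnbrs TE a = {c. {a,c} \<in> TE}"

lemma tnbrs_edge: "c \<in> tnbrs TE a \<longleftrightarrow> {c,a} \<in> TE"
  by (simp add: tnbrs_def insert_commute)

lemma finite_tnbrs: "proper_edges N TE \<Longrightarrow> finite N \<Longrightarrow> finite (tnbrs TE a)"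
  by (rule finite_subset[of _ N]) (auto simp: tnbrs_def dest: proper_edge)

lemma tdegree_tnbrs:
  assumes ok: "proper_edges N TE"
  shows "tdegree TE a = card (tnbrs TE a)"
proof -
  have "{e \<in> TE. a \<in> e} = (\<lambda>c. {a,c}) ` tnbrs TE a"
  proof
    show "(\<lambda>c. {a,c}) ` tnbrs TE a \<subseteq> {e \<in> TE. a \<in> e}" by (auto simp: tnbrs_def)
    show "{e \<in> TE. a \<in> e} \<subseteq> (\<lambda>c. {a,c}) ` tnbrs TE a"
    proof
      fix e assume e: "e \<in> {e \<in> TE. a \<in> e}"
      then obtain u v where "e = {u,v}" using ok unfolding proper_edges_def by blast
      then have "e = {a, if u = a then v else u}" using e by auto
      then show "e \<in> (\<lambda>c. {a,c}) ` tnbrs TE a" using e by (auto simp: tnbrs_def)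
    qed
  qed
  moreover have "inj_on (\<lambda>c. {a,c}) (tnbrs TE a)"
    by (auto simp: inj_on_def doubleton_eq_iff)
  ultimately show ?thesis unfolding tdegree_def by (simp add: card_image)
qed

lemma tcomp_avoids_centre:
  assumes T: "is_tree N TE" and c: "c \<in> tnbrs TE a" and x: "x \<in> tcomp TE c a"
  shows "(c,x) \<in> (edge_rel {e\<in>TE. a \<notin> e})\<^sup>*"
proof -
  have na: "a \<notin> tcomp TE c a" using tcomp_excludes_other_end[OF T] c by (simp add: tnbrs_edge)
  have "(c,x) \<in> (edge_rel (TE - {{c,a}}))\<^sup>*" using x by (simp add: tcomp_reach)
  then show ?thesis
  proof (induction rule: rtrancl_induct)
    case (step y z)
    have "(c,z) \<in> (edge_rel (TE - {{c,a}}))\<^sup>*" using step(1,2) by (rule rtrancl_into_rtrancl)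
    then have "y \<in> tcomp TE c a" "z \<in> tcomp TE c a" using step(1) by (simp_all add: tcomp_reach)
    then have "(y,z) \<in> edge_rel {e\<in>TE. a \<notin> e}" using step(2) na by auto
    then show ?case using step(3) by (rule rtrancl_into_rtrancl[rotated])
  qed simp
qed

lemma tcomp_children_disjoint:
  assumes T: "is_tree N TE" and c: "c \<in> tnbrs TE a" "c' \<in> tnbrs TE a" "c \<noteq> c'"
  shows "tcomp TE c a \<inter> tcomp TE c' a = {}"
proof (rule ccontr)
  assume "tcomp TE c a \<inter> tcomp TE c' a \<noteq> {}"
  then obtain x where x: "x \<in> tcomp TE c a" "x \<in> tcomp TE c' a" by auto
  let ?R = "edge_rel (TE - {{c',a}})"
  have "(c,x) \<in> (edge_rel {e\<in>TE. a \<notin> e})\<^sup>*" "(c',x) \<in> (edge_rel {e\<in>TE. a \<notin> e})\<^sup>*"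
    using tcomp_avoids_centre[OF T] c x by auto
  then have "(c',c) \<in> (edge_rel {e\<in>TE. a \<notin> e})\<^sup>*" using reach_sym by (meson rtrancl_trans)
  then have "(c',c) \<in> ?R\<^sup>*" by (rule reach_mono) auto
  moreover have "(c,a) \<in> ?R" using c by (auto simp: tnbrs_edge doubleton_eq_iff)
  ultimately have "(c',a) \<in> ?R\<^sup>*" by (rule rtrancl_into_rtrancl)
  then show False using tree_edge_separates[OF T] c(2) by (simp add: tnbrs_edge)
qed

lemma tcomp_children:
  assumes T: "is_tree N TE" and e: "{a,b} \<in> TE"
  shows "tcomp TE a b = insert a (\<Union>c\<in>tnbrs TE a - {b}. tcomp TE c a)"
proof
  let ?R = "edge_rel (TE - {{a,b}})"
  have "x \<in> tcomp TE a b" if c: "c \<in> tnbrs TE a" "c \<noteq> b" and x: "x \<in> tcomp TE c a" for c x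
  proof -
    have "(c,x) \<in> ?R\<^sup>*" using tcomp_avoids_centre[OF T c(1) x] by (rule reach_mono) auto
    moreover have "(a,c) \<in> ?R" using c by (auto simp: tnbrs_def doubleton_eq_iff)
    ultimately show ?thesis by (simp add: tcomp_reach converse_rtrancl_into_rtrancl)
  qed
  then show "insert a (\<Union>c\<in>tnbrs TE a - {b}. tcomp TE c a) \<subseteq> tcomp TE a b"
    using tcomp_self[of a TE b] by blast
  show "tcomp TE a b \<subseteq> insert a (\<Union>c\<in>tnbrs TE a - {b}. tcomp TE c a)"
  proof
    fix x assume "x \<in> tcomp TE a b"
    then have "(a,x) \<in> ?R\<^sup>*" by (simp add: tcomp_reach)
    then show "x \<in> insert a (\<Union>c\<in>tnbrs TE a - {b}. tcomp TE c a)"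
    proof (induction rule: rtrancl_induct)
      case (step y z)
      have yz: "{y,z} \<in> TE" "{y,z} \<noteq> {a,b}" using step(2) by auto
      show ?case
      proof (cases "y = a")
        case True
        then have "z \<in> tnbrs TE a" "z \<noteq> b" using yz by (auto simp: tnbrs_def)
        then show ?thesis using tcomp_self by blast
      next
        case False
        then obtain c where c: "c \<in> tnbrs TE a" "c \<noteq> b" "y \<in> tcomp TE c a" using step(3) by auto
        show ?thesis
        proof (cases "{y,z} = {c,a}")
          case False
          then have "(y,z) \<in> edge_rel (TE - {{c,a}})" using yz(1) by simp
          moreover have "(c,y) \<in> (edge_rel (TE - {{c,a}}))\<^sup>*" using c(3) by (simp add: tcomp_reach)
          ultimately have "z \<in> tcomp TE c a" by (simp add: tcomp_reach rtrancl_into_rtrancl)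
          then show ?thesis using c by blast
        qed (use \<open>y \<noteq> a\<close> in \<open>auto simp: doubleton_eq_iff\<close>)
      qed
    qed simp
  qed
qed

lemma tcomp_child_smaller:
  assumes T: "is_tree N TE" and e: "{a,b} \<in> TE" and c: "c \<in> tnbrs TE a" "c \<noteq> b"
  shows "card (tcomp TE c a) < card (tcomp TE a b)"
proof -
  have aN: "a \<in> N" using proper_edge[OF is_treeD(2)[OF T] e] by auto
  have fin: "finite (tcomp TE a b)" using tcomp_subset[OF T aN] is_treeD(1)[OF T] finite_subset by blast
  have "a \<notin> tcomp TE c a" using tcomp_excludes_other_end[OF T] c(1) by (simp add: tnbrs_edge)
  then have "tcomp TE c a \<subset> tcomp TE a b"
    using tcomp_children[OF T e] c tcomp_self[of a TE b] by blast
  then show ?thesis using fin psubset_card_mono by blast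
qed

lemma nodes_around_root:
  assumes T: "is_tree N TE" and r: "r \<in> N"
  shows "N = insert r (\<Union>c\<in>tnbrs TE r. tcomp TE c r)"
proof (cases "tnbrs TE r = {}")
  case True
  have "x = r" if x: "x \<in> N" for x
  proof -
    have "(r,x) \<in> (edge_rel TE \<inter> N \<times> N)\<^sup>*" using is_treeD(3)[OF T] r x by (simp add: tree_conn_reach)
    then show ?thesis
    proof (cases rule: converse_rtranclE)
      case (step y) then have "y \<in> tnbrs TE r" by (simp add: tnbrs_def)
      then show ?thesis using True by simp
    qed simp
  qed
  then have "N = {r}" using r by blast
  then show ?thesis using True by simp
next
  case False
  then obtain b where b: "b \<in> tnbrs TE r" by auto
  then have e: "{r,b} \<in> TE" by (simp add: tnbrs_def)
  have "N = tcomp TE r b \<union> tcomp TE b r" using tcomp_partition(2)[OF T e] by simp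
  also have "\<dots> = insert r (\<Union>c\<in>tnbrs TE r. tcomp TE c r)" using tcomp_children[OF T e] b by auto
  finally show ?thesis .
qed

definition sole_exit :: "nat set set \<Rightarrow> nat set \<Rightarrow> nat \<Rightarrow> nat \<Rightarrow> bool" where
  "sole_exit TE S x y \<longleftrightarrow> {x,y} \<in> TE \<and> y \<in> S \<and> x \<notin> S \<and>
     (\<forall>e\<in>TE - {{x,y}}. e \<subseteq> S \<or> e \<inter> S = {})"

lemma tcomp_sole_exit:
  assumes ex: "sole_exit TE S x y"
    and conn: "\<forall>z\<in>S. (y,z) \<in> (edge_rel TE \<inter> S \<times> S)\<^sup>*"
  shows "tcomp TE y x = S"
proof
  let ?R = "edge_rel (TE - {{y,x}})"
  show "S \<subseteq> tcomp TE y x"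
  proof
    fix z assume "z \<in> S"
    then have "(y,z) \<in> (edge_rel TE \<inter> S \<times> S)\<^sup>*" using conn by auto
    moreover have "edge_rel TE \<inter> S \<times> S \<subseteq> ?R" using ex by (auto simp: sole_exit_def doubleton_eq_iff)
    ultimately show "z \<in> tcomp TE y x" using rtrancl_mono by (auto simp: tcomp_reach)
  qed
  show "tcomp TE y x \<subseteq> S"
  proof
    fix z assume "z \<in> tcomp TE y x"
    then have "(y,z) \<in> ?R\<^sup>*" by (simp add: tcomp_reach)
    then show "z \<in> S"
    proof (induction rule: rtrancl_induct)
      case (step u z)
      then have uz: "{u,z} \<in> TE - {{x,y}}" by (auto simp: insert_commute)
      have "\<forall>e\<in>TE - {{x,y}}. e \<subseteq> S \<or> e \<inter> S = {}" using ex by (simp add: sole_exit_def)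
      then have "{u,z} \<subseteq> S \<or> {u,z} \<inter> S = {}" using uz by (rule bspec)
      then show ?case using step(3) by auto
    qed (use ex in \<open>simp add: sole_exit_def\<close>)
  qed
qed

section \<open>Binary trees as branch decompositions\<close>

text \<open>Binary trees with vertices at the leaves.  They are laid out as node-numbered trees with
  nodes h ..< h + bsize T in preorder (root h, left subtree from h + 1); bedges, blabel, bleafpos,
  bsubpos and bnbrs give the edges, leaf labelling, leaf positions, positioned subtrees and
  neighbourhoods of this layout.\<close>
datatype 'a btree = Lf 'a | Nd "'a btree" "'a btree"

fun bsize :: "'a btree \<Rightarrow> nat" where
  "bsize (Lf v) = 1" | "bsize (Nd l r) = Suc (bsize l + bsize r)"

fun leaves :: "'a btree \<Rightarrow> 'a set" where
  "leaves (Lf v) = {v}" | "leaves (Nd l r) = leaves l \<union> leaves r"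

fun distinct_leaves :: "'a btree \<Rightarrow> bool" where
  "distinct_leaves (Lf v) = True" | "distinct_leaves (Nd l r) = (distinct_leaves l \<and> distinct_leaves r \<and> leaves l \<inter> leaves r = {})"

fun subtrees :: "'a btree \<Rightarrow> 'a btree set" where
  "subtrees (Lf v) = {Lf v}" | "subtrees (Nd l r) = insert (Nd l r) (subtrees l \<union> subtrees r)"

fun bedges :: "nat \<Rightarrow> 'a btree \<Rightarrow> nat set set" where
  "bedges h (Lf v) = {}"
| "bedges h (Nd l r) = {{h, Suc h}, {h, Suc h + bsize l}} \<union> bedges (Suc h) l \<union> bedges (Suc h + bsize l) r"

fun blabel :: "nat \<Rightarrow> 'a btree \<Rightarrow> nat \<Rightarrow> 'a" where
  "blabel h (Lf v) = (\<lambda>x. v)"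
| "blabel h (Nd l r) = (\<lambda>x. if x < Suc h + bsize l then blabel (Suc h) l x else blabel (Suc h + bsize l) r x)"

fun bleafpos :: "nat \<Rightarrow> 'a btree \<Rightarrow> nat set" where
  "bleafpos h (Lf v) = {h}" | "bleafpos h (Nd l r) = bleafpos (Suc h) l \<union> bleafpos (Suc h + bsize l) r"

fun bsubpos :: "nat \<Rightarrow> 'a btree \<Rightarrow> (nat \<times> 'a btree) set" where
  "bsubpos h (Lf v) = {(h, Lf v)}"
| "bsubpos h (Nd l r) = insert (h, Nd l r) (bsubpos (Suc h) l \<union> bsubpos (Suc h + bsize l) r)"

fun bnbrs :: "nat \<Rightarrow> 'a btree \<Rightarrow> nat \<Rightarrow> nat set" where
  "bnbrs h (Lf v) x = {}"
| "bnbrs h (Nd l r) x = (if x = h then {Suc h, Suc h + bsize l} else {})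
     \<union> (if x = Suc h \<or> x = Suc h + bsize l then {h} else {})
     \<union> bnbrs (Suc h) l x \<union> bnbrs (Suc h + bsize l) r x"

definition bnodes :: "nat \<Rightarrow> 'a btree \<Rightarrow> nat set" where
  "bnodes h T = {h..<h + bsize T}"

lemma bsize_pos[simp]: "bsize T > 0" by (cases T) auto

lemma bsize_ne0[simp]: "bsize T \<noteq> 0" using bsize_pos[of T] by linarith

lemma finite_bnodes[simp]: "finite (bnodes h T)" by (simp add: bnodes_def)

lemma bedges_proper_ex: "e \<in> bedges h T \<Longrightarrow> \<exists>u v. u \<in> bnodes h T \<and> v \<in> bnodes h T \<and> u \<noteq> v \<and> e = {u,v}"
proof (induction T arbitrary: h)
  case (Lf v) then show ?case by simp
next
  case (Nd l r)
  have sl: "bsize l > 0" "bsize r > 0" using bsize_pos by auto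
  from Nd.prems consider "e = {h, Suc h}" | "e = {h, Suc h + bsize l}" | "e \<in> bedges (Suc h) l" | "e \<in> bedges (Suc h + bsize l) r"
    by auto
  then show ?case
  proof cases
    case 1 then show ?thesis using sl by (intro exI[of _ h] exI[of _ "Suc h"]) (auto simp: bnodes_def)
  next
    case 2 then show ?thesis using sl by (intro exI[of _ h] exI[of _ "Suc h + bsize l"]) (auto simp: bnodes_def)
  next
    case 3 from Nd.IH(1)[OF this] obtain u v where "u \<in> bnodes (Suc h) l" "v \<in> bnodes (Suc h) l" "u \<noteq> v" "e = {u,v}" by blast
    then show ?thesis by (intro exI[of _ u] exI[of _ v]) (auto simp: bnodes_def)
  next
    case 4 from Nd.IH(2)[OF this] obtain u v where "u \<in> bnodes (Suc h + bsize l) r" "v \<in> bnodes (Suc h + bsize l) r" "u \<noteq> v" "e = {u,v}" by blast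
    then show ?thesis by (intro exI[of _ u] exI[of _ v]) (auto simp: bnodes_def)
  qed
qed

lemma bedges_proper: "proper_edges (bnodes h T) (bedges h T)"
  using bedges_proper_ex unfolding proper_edges_def by blast

lemma bedges_subset: "e \<in> bedges h T \<Longrightarrow> e \<subseteq> bnodes h T"
  using bedges_proper_ex by blast

lemma finite_bedges: "finite (bedges h T)"
  by (induction T arbitrary: h) auto

lemma card_bedges: "card (bedges h T) + 1 = bsize T"
proof (induction T arbitrary: h)
  case (Lf v) then show ?case by simp
next
  case (Nd l r)
  have sl: "bsize l > 0" "bsize r > 0" using bsize_pos by auto
  let ?A = "{{h, Suc h}, {h, Suc h + bsize l}}"
  have d1: "bedges (Suc h) l \<inter> bedges (Suc h + bsize l) r = {}"
  proof (rule ccontr)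
    assume "\<not> ?thesis"
    then obtain e where e: "e \<in> bedges (Suc h) l" "e \<in> bedges (Suc h + bsize l) r" by auto
    obtain u v where "e = {u,v}" using bedges_proper_ex[OF e(1)] by blast
    then show False using bedges_subset[OF e(1)] bedges_subset[OF e(2)] by (auto simp: bnodes_def)
  qed
  have "h \<notin> e" if "e \<in> bedges (Suc h) l \<union> bedges (Suc h + bsize l) r" for e
    using that bedges_subset[of e "Suc h" l] bedges_subset[of e "Suc h + bsize l" r] by (force simp: bnodes_def)
  then have d2: "?A \<inter> (bedges (Suc h) l \<union> bedges (Suc h + bsize l) r) = {}" by blast
  have cA: "card ?A = 2" using sl by (auto simp: doubleton_eq_iff)
  have eq: "bedges h (Nd l r) = ?A \<union> (bedges (Suc h) l \<union> bedges (Suc h + bsize l) r)" by simp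
  have "card (bedges h (Nd l r)) = card ?A + card (bedges (Suc h) l \<union> bedges (Suc h + bsize l) r)"
    unfolding eq by (rule card_Un_disjoint) (use d2 finite_bedges in auto)
  also have "card (bedges (Suc h) l \<union> bedges (Suc h + bsize l) r) = card (bedges (Suc h) l) + card (bedges (Suc h + bsize l) r)"
    by (rule card_Un_disjoint) (use d1 finite_bedges in auto)
  then have "card ?A + card (bedges (Suc h) l \<union> bedges (Suc h + bsize l) r) = 2 + card (bedges (Suc h) l) + card (bedges (Suc h + bsize l) r)"
    using cA by simp
  finally show ?case using Nd.IH[of "Suc h"] Nd.IH(2)[of "Suc h + bsize l"] by simp
qed

lemma bedges_conn: "x \<in> bnodes h T \<Longrightarrow> (h,x) \<in> (edge_rel (bedges h T) \<inter> bnodes h T \<times> bnodes h T)\<^sup>*"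
proof (induction T arbitrary: h x)
  case (Lf v) then show ?case by (simp add: bnodes_def)
next
  case (Nd l r)
  let ?R = "edge_rel (bedges h (Nd l r)) \<inter> bnodes h (Nd l r) \<times> bnodes h (Nd l r)"
  have sl: "bsize l > 0" "bsize r > 0" using bsize_pos by auto
  have subl: "edge_rel (bedges (Suc h) l) \<inter> bnodes (Suc h) l \<times> bnodes (Suc h) l \<subseteq> ?R"
    by (auto simp: edge_rel_def bnodes_def)
  have subr: "edge_rel (bedges (Suc h + bsize l) r) \<inter> bnodes (Suc h + bsize l) r \<times> bnodes (Suc h + bsize l) r \<subseteq> ?R"
    by (auto simp: edge_rel_def bnodes_def)
  have e1: "(h, Suc h) \<in> ?R" using sl by (auto simp: bnodes_def)
  have e2: "(h, Suc h + bsize l) \<in> ?R" using sl by (auto simp: bnodes_def)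
  consider "x = h" | "x \<in> bnodes (Suc h) l" | "x \<in> bnodes (Suc h + bsize l) r"
    using Nd.prems unfolding bnodes_def by (cases "x = h"; cases "x < Suc h + bsize l") auto
  then show ?case
  proof cases
    case 1 then show ?thesis by simp
  next
    case 2
    have "(Suc h, x) \<in> ?R\<^sup>*" using Nd.IH(1)[OF 2] rtrancl_mono[OF subl] by blast
    then show ?thesis by (rule converse_rtrancl_into_rtrancl[OF e1])
  next
    case 3
    have "(Suc h + bsize l, x) \<in> ?R\<^sup>*" using Nd.IH(2)[OF 3] rtrancl_mono[OF subr] by blast
    then show ?thesis by (rule converse_rtrancl_into_rtrancl[OF e2])
  qed
qed

lemma is_tree_bedges: "is_tree (bnodes h T) (bedges h T)"
proof -
  have "tree_conn (bedges h T) (bnodes h T)"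
    unfolding tree_conn_reach
  proof (intro ballI)
    fix x y assume "x \<in> bnodes h T" "y \<in> bnodes h T"
    then have "(h,x) \<in> (edge_rel (bedges h T) \<inter> bnodes h T \<times> bnodes h T)\<^sup>*"
          "(h,y) \<in> (edge_rel (bedges h T) \<inter> bnodes h T \<times> bnodes h T)\<^sup>*" using bedges_conn by auto
    moreover have "sym (edge_rel (bedges h T) \<inter> bnodes h T \<times> bnodes h T)"
      using sym_edge_rel by (auto simp: sym_def)
    ultimately show "(x,y) \<in> (edge_rel (bedges h T) \<inter> bnodes h T \<times> bnodes h T)\<^sup>*"
      by (metis rtrancl_trans sym_def sym_rtrancl)
  qed
  moreover have "bnodes h T \<noteq> {}" using bsize_pos[of T] by (auto simp: bnodes_def)
  moreover have "card (bnodes h T) = bsize T" by (simp add: bnodes_def)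
  ultimately show ?thesis using bedges_proper[of h T] card_bedges[of h T]
    by (auto simp: is_tree_def proper_edges_def bnodes_def)
qed

lemma tnbrs_bedges: "tnbrs (bedges h T) x = bnbrs h T x"
proof (induction T arbitrary: h)
  case (Lf v) then show ?case by (simp add: tnbrs_def)
next
  case (Nd l r)
  have "tnbrs (bedges h (Nd l r)) x = tnbrs {{h, Suc h}, {h, Suc h + bsize l}} x \<union> tnbrs (bedges (Suc h) l) x \<union> tnbrs (bedges (Suc h + bsize l) r) x"
    by (auto simp: tnbrs_def)
  moreover have "tnbrs {{h, Suc h}, {h, Suc h + bsize l}} x = (if x = h then {Suc h, Suc h + bsize l} else {})
     \<union> (if x = Suc h \<or> x = Suc h + bsize l then {h} else {})"
    by (auto simp: tnbrs_def doubleton_eq_iff)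
  ultimately show ?case using Nd.IH by simp
qed

lemma bnbrs_outside: "x \<notin> bnodes h T \<Longrightarrow> bnbrs h T x = {}"
  by (induction T arbitrary: h) (auto simp: bnodes_def)

lemma bnbrs_subset: "bnbrs h T x \<subseteq> bnodes h T"
proof (induction T arbitrary: h)
  case (Nd l r)
  from Nd.IH(1)[of "Suc h"] Nd.IH(2)[of "Suc h + bsize l"] show ?case
    by (auto simp: bnodes_def)
qed simp

lemma bleafpos_subset: "bleafpos h T \<subseteq> bnodes h T"
proof (induction T arbitrary: h)
  case (Nd l r)
  from Nd.IH(1)[of "Suc h"] Nd.IH(2)[of "Suc h + bsize l"] show ?case
    by (auto simp: bnodes_def)
qed (simp add: bnodes_def)

lemma bsubpos_self[simp]: "(h,T) \<in> bsubpos h T" by (cases T) auto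

lemma root_bleafpos: "h \<in> bleafpos h T \<longleftrightarrow> (\<exists>v. T = Lf v)"
proof (cases T)
  case (Nd l r)
  have "h \<notin> bleafpos (Suc h) l" "h \<notin> bleafpos (Suc h + bsize l) r"
    using bleafpos_subset[of "Suc h" l] bleafpos_subset[of "Suc h + bsize l" r] by (auto simp: bnodes_def)
  then show ?thesis using Nd by simp
qed simp

lemma card_bnbrs:
  "x \<in> bnodes h T \<Longrightarrow> card (bnbrs h T x) =
     (if x = h then (case T of Lf v \<Rightarrow> 0 | Nd l r \<Rightarrow> 2) else if x \<in> bleafpos h T then 1 else 3)"
proof (induction T arbitrary: h x)
  case (Lf v) then show ?case by (simp add: bnodes_def)
next
  case (Nd l r)
  have sl: "bsize l > 0" "bsize r > 0" using bsize_pos by auto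
  consider "x = h" | "x \<in> bnodes (Suc h) l" | "x \<in> bnodes (Suc h + bsize l) r"
    using Nd.prems unfolding bnodes_def by (cases "x = h"; cases "x < Suc h + bsize l") auto
  then show ?case
  proof cases
    case 1
    have "bnbrs (Suc h) l x = {}" "bnbrs (Suc h + bsize l) r x = {}" using 1
      by (auto intro!: bnbrs_outside simp: bnodes_def)
    then show ?thesis using 1 sl by auto
  next
    case 2
    have h: "x \<noteq> h" "x \<noteq> Suc h + bsize l" using 2 by (auto simp: bnodes_def)
    have rr: "bnbrs (Suc h + bsize l) r x = {}" using 2 by (auto intro!: bnbrs_outside simp: bnodes_def)
    have xl: "x \<notin> bleafpos (Suc h + bsize l) r" using 2 bleafpos_subset[of "Suc h + bsize l" r] by (auto simp: bnodes_def)
    have ol: "h \<notin> bnbrs (Suc h) l x" using bnbrs_subset[of "Suc h" l x] by (auto simp: bnodes_def)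
    have fin: "finite (bnbrs (Suc h) l x)" using bnbrs_subset[of "Suc h" l x] finite_subset by (auto simp: bnodes_def)
    show ?thesis
    proof (cases "x = Suc h")
      case True
      have "bnbrs h (Nd l r) x = insert h (bnbrs (Suc h) l x)" using h True rr by auto
      then have "card (bnbrs h (Nd l r) x) = Suc (card (bnbrs (Suc h) l x))" using ol fin by simp
      then show ?thesis using Nd.IH(1)[OF 2] True h xl root_bleafpos[of "Suc h" l] by (cases l) auto
    next
      case False
      have "bnbrs h (Nd l r) x = bnbrs (Suc h) l x" using h False rr by auto
      then show ?thesis using Nd.IH(1)[OF 2] False h xl by simp
    qed
  next
    case 3
    have h: "x \<noteq> h" "x \<noteq> Suc h" using 3 sl by (auto simp: bnodes_def)
    have rr: "bnbrs (Suc h) l x = {}" using 3 by (auto intro!: bnbrs_outside simp: bnodes_def)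
    have xl: "x \<notin> bleafpos (Suc h) l" using 3 bleafpos_subset[of "Suc h" l] by (auto simp: bnodes_def)
    have ol: "h \<notin> bnbrs (Suc h + bsize l) r x" using bnbrs_subset[of "Suc h + bsize l" r x] by (auto simp: bnodes_def)
    have fin: "finite (bnbrs (Suc h + bsize l) r x)" using bnbrs_subset[of "Suc h + bsize l" r x] finite_subset by (auto simp: bnodes_def)
    show ?thesis
    proof (cases "x = Suc h + bsize l")
      case True
      have "bnbrs h (Nd l r) x = insert h (bnbrs (Suc h + bsize l) r x)" using h True rr by auto
      then have "card (bnbrs h (Nd l r) x) = Suc (card (bnbrs (Suc h + bsize l) r x))" using ol fin by simp
      then show ?thesis using Nd.IH(2)[OF 3] True h xl root_bleafpos[of "Suc h + bsize l" r] by (cases r) auto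
    next
      case False
      have "bnbrs h (Nd l r) x = bnbrs (Suc h + bsize l) r x" using h False rr by auto
      then show ?thesis using Nd.IH(2)[OF 3] False h xl by simp
    qed
  qed
qed

lemma tdegree_bedges: "x \<in> bnodes h T \<Longrightarrow> tdegree (bedges h T) x = card (bnbrs h T x)"
  using tdegree_tnbrs[OF bedges_proper, of h T x] by (simp add: tnbrs_bedges)

lemma tleaves_bedges: "tleaves (bnodes h T) (bedges h T) = bleafpos h T"
proof -
  have "x \<in> bnodes h T \<Longrightarrow> tdegree (bedges h T) x \<le> 1 \<longleftrightarrow> x \<in> bleafpos h T" for x
    using tdegree_bedges[of x h T] card_bnbrs[of x h T] root_bleafpos[of h T] by (cases T) (auto simp: bnodes_def)
  then show ?thesis using bleafpos_subset by (auto simp: tleaves_def)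
qed

lemma tdegree_bedges_le3: "x \<in> bnodes h T \<Longrightarrow> tdegree (bedges h T) x \<le> 3"
  using tdegree_bedges[of x h T] card_bnbrs[of x h T] by (cases T) auto

lemma blabel_bij: "distinct_leaves T \<Longrightarrow> bij_betw (blabel h T) (bleafpos h T) (leaves T)"
proof (induction T arbitrary: h)
  case (Lf v) then show ?case by (simp add: bij_betw_def)
next
  case (Nd l r)
  let ?f = "blabel h (Nd l r)"
  have bl: "bij_betw (blabel (Suc h) l) (bleafpos (Suc h) l) (leaves l)" using Nd by simp
  have br: "bij_betw (blabel (Suc h + bsize l) r) (bleafpos (Suc h + bsize l) r) (leaves r)" using Nd by simp
  have fl: "\<And>x. x\<in>bleafpos (Suc h) l \<Longrightarrow> ?f x = blabel (Suc h) l x" using bleafpos_subset[of "Suc h" l] by (auto simp: bnodes_def)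
  have fr: "\<And>x. x\<in>bleafpos (Suc h + bsize l) r \<Longrightarrow> ?f x = blabel (Suc h + bsize l) r x" using bleafpos_subset[of "Suc h + bsize l" r] by (auto simp: bnodes_def)
  have "bij_betw ?f (bleafpos (Suc h) l) (leaves l) = bij_betw (blabel (Suc h) l) (bleafpos (Suc h) l) (leaves l)"
    by (rule bij_betw_cong) (rule fl)
  then have bl': "bij_betw ?f (bleafpos (Suc h) l) (leaves l)" using bl by simp
  have "bij_betw ?f (bleafpos (Suc h + bsize l) r) (leaves r) = bij_betw (blabel (Suc h + bsize l) r) (bleafpos (Suc h + bsize l) r) (leaves r)"
    by (rule bij_betw_cong) (rule fr)
  then have br': "bij_betw ?f (bleafpos (Suc h + bsize l) r) (leaves r)" using br by simp
  have "bij_betw ?f (bleafpos (Suc h) l \<union> bleafpos (Suc h + bsize l) r) (leaves l \<union> leaves r)"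
    using bij_betw_combine[OF bl' br'] Nd.prems by simp
  then show ?case by simp
qed

lemma bsubpos_range: "(q,s) \<in> bsubpos h T \<Longrightarrow> h \<le> q \<and> q + bsize s \<le> h + bsize T \<and> s \<in> subtrees T"
  by (induction T arbitrary: h) (fastforce)+

lemma bsubpos_nodes: "(q,s) \<in> bsubpos h T \<Longrightarrow> bnodes q s \<subseteq> bnodes h T"
  using bsubpos_range by (fastforce simp: bnodes_def)

lemma bsubpos_edges: "(q,s) \<in> bsubpos h T \<Longrightarrow> bedges q s \<subseteq> bedges h T"
  by (induction T arbitrary: h) auto

lemma bsubpos_leafpos: "(q,s) \<in> bsubpos h T \<Longrightarrow> bleafpos h T \<inter> bnodes q s = bleafpos q s"
proof (induction T arbitrary: h)
  case (Lf v) then show ?case by (simp add: bnodes_def)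
next
  case (Nd l r)
  have A: "bleafpos h (Nd l r) \<inter> bnodes h (Nd l r) = bleafpos h (Nd l r)" using bleafpos_subset by blast
  from Nd.prems consider "(q,s) = (h, Nd l r)" | "(q,s) \<in> bsubpos (Suc h) l" | "(q,s) \<in> bsubpos (Suc h + bsize l) r" by auto
  then show ?case
  proof cases
    case 1 then show ?thesis using A by simp
  next
    case 2
    have "bleafpos (Suc h + bsize l) r \<inter> bnodes q s = {}"
      using bsubpos_nodes[OF 2] bleafpos_subset[of "Suc h + bsize l" r] by (auto simp: bnodes_def)
    then show ?thesis using Nd.IH(1)[OF 2] by auto
  next
    case 3
    have "bleafpos (Suc h) l \<inter> bnodes q s = {}"
      using bsubpos_nodes[OF 3] bleafpos_subset[of "Suc h" l] by (auto simp: bnodes_def)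
    then show ?thesis using Nd.IH(2)[OF 3] by auto
  qed
qed

lemma bsubpos_label: "(q,s) \<in> bsubpos h T \<Longrightarrow> x \<in> bnodes q s \<Longrightarrow> blabel h T x = blabel q s x"
proof (induction T arbitrary: h)
  case (Lf v) then show ?case by simp
next
  case (Nd l r)
  from Nd.prems(1) consider "(q,s) = (h, Nd l r)" | "(q,s) \<in> bsubpos (Suc h) l" | "(q,s) \<in> bsubpos (Suc h + bsize l) r" by auto
  then show ?case
  proof cases
    case 1 then show ?thesis by simp
  next
    case 2 then show ?thesis using Nd.IH(1)[OF 2 Nd.prems(2)] bsubpos_nodes[OF 2] Nd.prems(2) by (auto simp: bnodes_def)
  next
    case 3 then show ?thesis using Nd.IH(2)[OF 3 Nd.prems(2)] bsubpos_nodes[OF 3] Nd.prems(2) by (auto simp: bnodes_def)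
  qed
qed

lemma subtrees_distinct: "s \<in> subtrees T \<Longrightarrow> distinct_leaves T \<Longrightarrow> distinct_leaves s"
  by (induction T) auto

lemma subtrees_leaves: "s \<in> subtrees T \<Longrightarrow> leaves s \<subseteq> leaves T"
  by (induction T) auto

lemma branch_decomp_btree: "distinct_leaves T \<Longrightarrow> branch_decomp (leaves T) (bnodes 0 T) (bedges 0 T) (blabel 0 T)"
  unfolding branch_decomp_def using is_tree_bedges tdegree_bedges_le3 tleaves_bedges blabel_bij by metis

lemma sole_exit_extend:
  assumes "sole_exit F S x q" and "\<forall>e\<in>G. e \<subseteq> S \<or> e \<inter> S = {}"
  shows "sole_exit (F \<union> G) S x q"
  using assms unfolding sole_exit_def by blast

lemma sole_exit_single: "q \<in> S \<Longrightarrow> x \<notin> S \<Longrightarrow> sole_exit {{x,q}} S x q"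
  by (simp add: sole_exit_def)

lemma sole_exit_intro:
  assumes "q \<in> S" "x \<notin> S" "\<forall>e\<in>G1. e \<subseteq> S" "\<forall>e\<in>G2. e \<inter> S = {}"
  shows "sole_exit ({{x,q}} \<union> G1 \<union> G2) S x q"
proof -
  have "sole_exit ({{x,q}} \<union> G1) S x q"
    by (rule sole_exit_extend[OF sole_exit_single[OF assms(1,2)]]) (use assms(3) in blast)
  then show ?thesis by (rule sole_exit_extend) (use assms(4) in blast)
qed

lemma sole_exit_lift:
  assumes "sole_exit F S x q" "S \<subseteq> {a<..<b}" "\<forall>e\<in>G. \<forall>y\<in>e. y \<le> a \<or> b \<le> y"
  shows "sole_exit (F \<union> G) S x q"
proof (rule sole_exit_extend[OF assms(1)])
  have "e \<inter> S = {}" if "e \<in> G" for e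
    using assms(2) bspec[OF assms(3) that] by fastforce
  then show "\<forall>e\<in>G. e \<subseteq> S \<or> e \<inter> S = {}" by blast
qed

lemma bedges_sole_exit:
  "e \<in> bedges h T \<Longrightarrow> \<exists>x q s. e = {x,q} \<and> (q,s) \<in> bsubpos h T \<and> q \<noteq> h \<and>
     sole_exit (bedges h T) (bnodes q s) x q"
proof (induction T arbitrary: h)
  case (Nd l r)
  define m where "m = Suc h + bsize l"
  let ?L = "bedges (Suc h) l" and ?R = "bedges m r"
  have m: "Suc h < m" by (simp add: m_def)
  have blocks: "bnodes (Suc h) l = {Suc h..<m}" "bnodes m r = {m..<m + bsize r}"
    by (simp_all add: bnodes_def m_def)
  have L: "\<forall>e\<in>?L. e \<subseteq> {Suc h..<m}" and R: "\<forall>e\<in>?R. e \<subseteq> {m..<m + bsize r}"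
    using bedges_subset[of _ "Suc h" l] bedges_subset[of _ m r] unfolding blocks by blast+
  have root: "\<forall>e\<in>{{h, Suc h}, {h, m}}. \<forall>y\<in>e. y \<le> m" using m by auto
  have apart: "\<forall>e\<in>?R. e \<inter> {Suc h..<m} = {}" "\<forall>e\<in>?L. e \<inter> {m..<m + bsize r} = {}"
  proof
    fix e assume "e \<in> ?R"
    then have "e \<subseteq> {m..<m + bsize r}" using R by blast
    then show "e \<inter> {Suc h..<m} = {}" by auto
  next
    show "\<forall>e\<in>?L. e \<inter> {m..<m + bsize r} = {}"
    proof
      fix e assume "e \<in> ?L"
      then have "e \<subseteq> {Suc h..<m}" using L by blast
      then show "e \<inter> {m..<m + bsize r} = {}" by auto
    qed
  qed
  have split: "bedges h (Nd l r) = {{h, Suc h}} \<union> {{h, m}} \<union> ?L \<union> ?R"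
    by (auto simp: m_def)
  from Nd.prems consider "e = {h, Suc h}" | "e = {h, m}" | "e \<in> ?L" | "e \<in> ?R"
    by (auto simp: m_def)
  then show ?case
  proof cases
    case 1
    have "sole_exit ({{h, Suc h}} \<union> ?L \<union> ({{h, m}} \<union> ?R)) {Suc h..<m} h (Suc h)"
      by (rule sole_exit_intro) (use m L R apart in auto)
    moreover have "{{h, Suc h}} \<union> ?L \<union> ({{h, m}} \<union> ?R) = bedges h (Nd l r)" using split by blast
    ultimately have "sole_exit (bedges h (Nd l r)) (bnodes (Suc h) l) h (Suc h)" using blocks by simp
    then show ?thesis using 1 by (intro exI[of _ h] exI[of _ "Suc h"] exI[of _ l]) simp
  next
    case 2
    have "sole_exit ({{h, m}} \<union> ?R \<union> ({{h, Suc h}} \<union> ?L)) {m..<m + bsize r} h m"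
      by (rule sole_exit_intro) (use m L R apart in auto)
    moreover have "{{h, m}} \<union> ?R \<union> ({{h, Suc h}} \<union> ?L) = bedges h (Nd l r)" using split by blast
    ultimately have "sole_exit (bedges h (Nd l r)) (bnodes m r) h m" using blocks by simp
    then show ?thesis using 2 m by (intro exI[of _ h] exI[of _ m] exI[of _ r]) (simp add: m_def)
  next
    case 3
    then obtain x q s where xqs: "e = {x,q}" "(q,s) \<in> bsubpos (Suc h) l" "q \<noteq> Suc h"
      "sole_exit ?L (bnodes q s) x q"
      using Nd.IH(1) by blast
    have "bnodes q s \<subseteq> {Suc h<..<m}"
      using bsubpos_range[OF xqs(2)] xqs(3) by (auto simp: bnodes_def m_def)
    then have "sole_exit (?L \<union> ({{h, Suc h}, {h, m}} \<union> ?R)) (bnodes q s) x q"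
      by (rule sole_exit_lift[OF xqs(4)]) (use root R in fastforce)
    moreover have "?L \<union> ({{h, Suc h}, {h, m}} \<union> ?R) = bedges h (Nd l r)" using split by blast
    moreover have "(q, s) \<in> bsubpos h (Nd l r)" "q \<noteq> h" using xqs(2) bsubpos_range[OF xqs(2)] by auto
    ultimately show ?thesis using xqs(1) by (intro exI[of _ x] exI[of _ q] exI[of _ s]) simp
  next
    case 4
    then obtain x q s where xqs: "e = {x,q}" "(q,s) \<in> bsubpos m r" "q \<noteq> m"
      "sole_exit ?R (bnodes q s) x q"
      using Nd.IH(2) by blast
    have "bnodes q s \<subseteq> {m<..<m + bsize r}"
      using bsubpos_range[OF xqs(2)] xqs(3) by (auto simp: bnodes_def)
    then have "sole_exit (?R \<union> ({{h, Suc h}, {h, m}} \<union> ?L)) (bnodes q s) x q"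
      by (rule sole_exit_lift[OF xqs(4)]) (use root L in fastforce)
    moreover have "?R \<union> ({{h, Suc h}, {h, m}} \<union> ?L) = bedges h (Nd l r)" using split by blast
    moreover have "(q, s) \<in> bsubpos h (Nd l r)" "q \<noteq> h"
      using xqs(2) bsubpos_range[OF xqs(2)] m by (auto simp: m_def)
    ultimately show ?thesis using xqs(1) by (intro exI[of _ x] exI[of _ q] exI[of _ s]) simp
  qed
qed simp

lemma bedges_tcomp_subtree:
  assumes e: "{a,b} \<in> bedges 0 T"
  obtains x q s where "{a,b} = {x,q}" "(q,s) \<in> bsubpos 0 T" "tcomp (bedges 0 T) q x = bnodes q s"
proof -
  obtain x q s where xqs: "{a,b} = {x,q}" "(q,s) \<in> bsubpos 0 T"
    "sole_exit (bedges 0 T) (bnodes q s) x q"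
    using bedges_sole_exit[OF e] by blast
  have "(q,z) \<in> (edge_rel (bedges 0 T) \<inter> bnodes q s \<times> bnodes q s)\<^sup>*" if "z \<in> bnodes q s" for z
  proof -
    have "(q,z) \<in> (edge_rel (bedges q s) \<inter> bnodes q s \<times> bnodes q s)\<^sup>*" using that by (rule bedges_conn)
    moreover have "edge_rel (bedges q s) \<subseteq> edge_rel (bedges 0 T)"
      using edge_rel_mono[OF bsubpos_edges[OF xqs(2)]] .
    ultimately show ?thesis using rtrancl_mono[of "edge_rel (bedges q s) \<inter> bnodes q s \<times> bnodes q s"] by blast
  qed
  then have "tcomp (bedges 0 T) q x = bnodes q s" using tcomp_sole_exit[OF xqs(3)] by blast
  then show thesis using that xqs(1,2) by blast
qed

lemma btree_cut_sides:
  assumes w: "distinct_leaves T" and e: "{a,b} \<in> bedges 0 T"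
  shows "\<exists>s\<in>subtrees T. blabel 0 T ` (tleaves (bnodes 0 T) (bedges 0 T) \<inter> tcomp (bedges 0 T) a b)
           \<in> {leaves s, leaves T - leaves s}"
proof -
  let ?N = "bnodes 0 T" and ?TE = "bedges 0 T" and ?f = "blabel 0 T"
  obtain x q s where xqs: "{a,b} = {x,q}" "(q,s) \<in> bsubpos 0 T" and tq: "tcomp ?TE q x = bnodes q s"
    using bedges_tcomp_subtree[OF e] by blast
  have sT: "s \<in> subtrees T" using bsubpos_range[OF xqs(2)] by simp
  have exq: "{x,q} \<in> ?TE" using e xqs(1) by simp
  have tx: "tcomp ?TE x q = ?N - bnodes q s"
    using tcomp_partition[OF is_tree_bedges exq] tq by blast
  have lv: "tleaves ?N ?TE = bleafpos 0 T" by (rule tleaves_bedges)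
  have A1: "?f ` (tleaves ?N ?TE \<inter> tcomp ?TE q x) = leaves s"
  proof -
    have "tleaves ?N ?TE \<inter> tcomp ?TE q x = bleafpos q s" using lv tq bsubpos_leafpos[OF xqs(2)] by simp
    moreover have "?f ` bleafpos q s = blabel q s ` bleafpos q s"
      using bsubpos_label[OF xqs(2)] bleafpos_subset[of q s] by (auto simp: image_def) (metis subsetD)+
    moreover have "blabel q s ` bleafpos q s = leaves s"
      using blabel_bij[OF subtrees_distinct[OF sT w]] by (simp add: bij_betw_def)
    ultimately show ?thesis by simp
  qed
  have bij: "bij_betw ?f (bleafpos 0 T) (leaves T)" using blabel_bij[OF w] .
  have A2: "?f ` (tleaves ?N ?TE \<inter> tcomp ?TE x q) = leaves T - leaves s"
  proof -
    have "tleaves ?N ?TE \<inter> tcomp ?TE x q = bleafpos 0 T - (bleafpos 0 T \<inter> tcomp ?TE q x)"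
      using lv tx bleafpos_subset[of 0 T] tq by auto
    then have "?f ` (tleaves ?N ?TE \<inter> tcomp ?TE x q) = ?f ` bleafpos 0 T - ?f ` (bleafpos 0 T \<inter> tcomp ?TE q x)"
      using bij inj_on_image_set_diff[of ?f "bleafpos 0 T" "bleafpos 0 T" "bleafpos 0 T \<inter> tcomp ?TE q x"]
      by (simp add: bij_betw_def)
    then show ?thesis using A1 lv bij by (simp add: bij_betw_def)
  qed
  from xqs(1) have "(a = x \<and> b = q) \<or> (a = q \<and> b = x)" by (auto simp: doubleton_eq_iff)
  then show ?thesis using A1 A2 sT by blast
qed

section \<open>Matchings across cuts\<close>

definition cut_edges :: "'a set \<Rightarrow> ('a \<Rightarrow> 'a \<Rightarrow> bool) \<Rightarrow> 'a set \<Rightarrow> ('a \<times> 'a) set" where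
  "cut_edges V E A = {(u, v). u \<in> A \<and> v \<in> V - A \<and> E u v}"

definition matchings :: "'a set \<Rightarrow> ('a \<Rightarrow> 'a \<Rightarrow> bool) \<Rightarrow> 'a set \<Rightarrow> ('a \<times> 'a) set set" where
  "matchings V E A = {M. M \<subseteq> cut_edges V E A \<and> inj_on fst M \<and> inj_on snd M}"

lemma mm_alt: "mm V E A = Max (card ` matchings V E A)"
  unfolding mm_def matchings_def cut_edges_def by (rule arg_cong[where f=Max]) auto

lemma matchings_finite:
  assumes "finite V" "A \<subseteq> V" shows "finite (matchings V E A)"
proof -
  have "matchings V E A \<subseteq> Pow (V \<times> V)" using assms(2) by (auto simp: matchings_def cut_edges_def)
  then show ?thesis using assms finite_subset by blast
qed

lemma empty_matching: "{} \<in> matchings V E A" by (simp add: matchings_def)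

lemma max_matching_exists:
  assumes "finite V" "A \<subseteq> V" shows "\<exists>M\<in>matchings V E A. card M = mm V E A"
proof -
  have "mm V E A \<in> card ` matchings V E A"
    unfolding mm_alt using matchings_finite[OF assms] empty_matching[of V E A] by (intro Max_in) auto
  then show ?thesis by auto
qed

lemma matching_le_mm:
  assumes "finite V" "A \<subseteq> V" "M \<in> matchings V E A" shows "card M \<le> mm V E A"
  unfolding mm_alt using matchings_finite[OF assms(1,2)] assms(3) by (intro Max_ge) auto

lemma mm_le_cover:
  assumes fin: "finite V" and AV: "A \<subseteq> V" and fB: "finite Bg"
    and cov: "\<forall>u v. u \<in> A \<longrightarrow> v \<in> V - A \<longrightarrow> E u v \<longrightarrow> u \<in> Bg \<or> v \<in> Bg"
  shows "mm V E A \<le> card Bg"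
proof -
  obtain M where M: "M \<in> matchings V E A" "card M = mm V E A" using max_matching_exists[OF fin AV] by blast
  let ?g = "\<lambda>p. if fst p \<in> Bg then fst p else snd p"
  have sub: "M \<subseteq> cut_edges V E A" and i1: "inj_on fst M" and i2: "inj_on snd M" using M(1) by (auto simp: matchings_def)
  have "inj_on ?g M"
  proof (rule inj_onI)
    fix p q assume p: "p \<in> M" and q: "q \<in> M" and eq: "?g p = ?g q"
    have pc: "fst p \<in> A" "snd p \<notin> A" "fst q \<in> A" "snd q \<notin> A" using sub p q by (auto simp: cut_edges_def)
    show "p = q"
    proof (cases "fst p \<in> Bg")
      case True
      show ?thesis
      proof (cases "fst q \<in> Bg")
        case True then show ?thesis using \<open>fst p \<in> Bg\<close> eq i1 p q by (auto simp: inj_on_def)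
      next
        case False then show ?thesis using \<open>fst p \<in> Bg\<close> eq pc by auto
      qed
    next
      case False
      show ?thesis
      proof (cases "fst q \<in> Bg")
        case True then show ?thesis using \<open>fst p \<notin> Bg\<close> eq pc by auto
      next
        case False then show ?thesis using \<open>fst p \<notin> Bg\<close> eq i2 p q by (auto simp: inj_on_def)
      qed
    qed
  qed
  moreover have "?g ` M \<subseteq> Bg"
  proof
    fix x assume "x \<in> ?g ` M"
    then obtain p where p: "p \<in> M" "x = ?g p" by auto
    obtain u v where [simp]: "p = (u,v)" by (cases p)
    have "u \<in> A" "v \<in> V - A" "E u v" using sub p by (auto simp: cut_edges_def)
    then have "u \<in> Bg \<or> v \<in> Bg" using cov by blast
    then show "x \<in> Bg" using p(2) by auto
  qed
  ultimately have "card M \<le> card Bg" using fB card_image[of ?g M] card_mono[OF fB, of "?g ` M"] by linarith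
  then show ?thesis using M(2) by simp
qed

lemma graph_sym: "graph V E \<Longrightarrow> E u v \<Longrightarrow> E v u" by (simp add: graph_def)
lemma graph_in: "graph V E \<Longrightarrow> E u v \<Longrightarrow> u \<in> V \<and> v \<in> V" by (simp add: graph_def)
lemma graph_irr: "graph V E \<Longrightarrow> \<not> E u u" by (simp add: graph_def)
lemma graph_fin: "graph V E \<Longrightarrow> finite V" by (simp add: graph_def)

lemma mm_complement:
  assumes G: "graph V E" and A: "A \<subseteq> V"
  shows "mm V E (V - A) = mm V E A"
proof -
  have VA: "V - (V - A) = A" using A by auto
  have "card ` matchings V E (V - A) = card ` matchings V E A"
  proof -
    have 1: "prod.swap ` M \<in> matchings V E A" if "M \<in> matchings V E (V - A)" for M
      using that graph_sym[OF G] VA unfolding matchings_def cut_edges_def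
      by (auto simp: inj_on_def)
    have 2: "prod.swap ` M \<in> matchings V E (V - A)" if "M \<in> matchings V E A" for M
      using that graph_sym[OF G] VA unfolding matchings_def cut_edges_def
      by (auto simp: inj_on_def)
    have c: "card (prod.swap ` M) = card M" for M :: "('a \<times> 'a) set"
      by (rule card_image) (metis inj_on_def swap_swap)
    show ?thesis
    proof
      show "card ` matchings V E (V - A) \<subseteq> card ` matchings V E A"
        using 1 c by (metis image_subsetI rev_image_eqI)
      show "card ` matchings V E A \<subseteq> card ` matchings V E (V - A)"
        using 2 c by (metis image_subsetI rev_image_eqI)
    qed
  qed
  then show ?thesis by (simp add: mm_alt)
qed

lemma sm_le: "sm V E A \<le> max 1 (mm V E A)"
  by (simp add: sm_def)

lemma Sup_nat_le: "finite X \<Longrightarrow> (\<forall>x\<in>X. x \<le> (w::nat)) \<Longrightarrow> Sup X \<le> w"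
  by (simp add: Sup_nat_def)

lemma le_Sup_nat: "finite X \<Longrightarrow> x \<in> X \<Longrightarrow> x \<le> Sup (X::nat set)"
  by (simp add: le_cSup_finite)

lemma cuts_finite:
  assumes "finite N" "proper_edges N TE"
  shows "finite {g a b | a b. {a,b} \<in> TE}"
proof -
  have "{g a b | a b. {a,b} \<in> TE} \<subseteq> (\<lambda>(a,b). g a b) ` (N \<times> N)"
    using proper_edge[OF assms(2)] by fastforce
  then show ?thesis using assms(1) finite_subset by blast
qed

section \<open>Part 1: tree decompositions give branch decompositions of small sm-width\<close>

definition hierarchy :: "('a set \<Rightarrow> bool) \<Rightarrow> 'a btree \<Rightarrow> bool" where
  "hierarchy P T \<longleftrightarrow> distinct_leaves T \<and> (\<forall>s\<in>subtrees T. P (leaves s))"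

lemma hierarchy_comb:
  assumes "finite F" "F \<noteq> {}"
    and "\<forall>A\<in>F. \<exists>T. hierarchy P T \<and> leaves T = A"
    and "\<forall>A\<in>F. \<forall>B\<in>F. A \<noteq> B \<longrightarrow> A \<inter> B = {}"
    and "\<forall>G. G \<subseteq> F \<longrightarrow> G \<noteq> {} \<longrightarrow> P (\<Union>G)"
  shows "\<exists>T. hierarchy P T \<and> leaves T = \<Union>F"
  using assms
proof (induction F rule: finite_ne_induct)
  case (singleton A)
  then show ?case by auto
next
  case (insert A F)
  have "\<forall>B\<in>F. \<exists>T. hierarchy P T \<and> leaves T = B" using insert.prems(1) by simp
  moreover have "\<forall>B\<in>F. \<forall>B'\<in>F. B \<noteq> B' \<longrightarrow> B \<inter> B' = {}" using insert.prems(2) by simp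
  moreover have "\<forall>G. G \<subseteq> F \<longrightarrow> G \<noteq> {} \<longrightarrow> P (\<Union>G)"
    using insert.prems(3) by (meson subset_insertI2)
  ultimately obtain R where R: "hierarchy P R" "leaves R = \<Union>F" using insert.IH by blast
  obtain L where L: "hierarchy P L" "leaves L = A" using insert.prems(1) by auto
  have "\<forall>B\<in>F. A \<inter> B = {}" using insert.prems(2) insert.hyps(3) by auto
  then have disj: "leaves L \<inter> leaves R = {}" using L(2) R(2) by auto
  have "P (\<Union>(insert A F))" using insert.prems(3) by blast
  then have "P (leaves (Nd L R))" using L(2) R(2) by simp
  then have "hierarchy P (Nd L R)" using L(1) R(1) disj by (auto simp: hierarchy_def)
  then show ?case using L(2) R(2) by (intro exI[of _ "Nd L R"]) simp
qed

locale bounded_tree_decomp =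
  fixes V :: "'a set" and E and N and TE and B and w :: nat
  assumes G: "graph V E" and TD: "tree_decomp V E N TE B" and bag: "\<forall>x\<in>N. card (B x) \<le> w"
begin

lemma T: "is_tree N TE" using TD by (simp add: tree_decomp_def)
lemma ok: "proper_edges N TE" using is_treeD[OF T] by simp
lemma finN: "finite N" using is_treeD[OF T] by simp
lemma finV: "finite V" using G by (simp add: graph_def)
lemma bag_subset: "x \<in> N \<Longrightarrow> B x \<subseteq> V" using TD by (simp add: tree_decomp_def)
lemma bags_cover: "(\<Union>x\<in>N. B x) = V" using TD by (simp add: tree_decomp_def)
lemma edge_in_bag: "E u v \<Longrightarrow> \<exists>x\<in>N. u \<in> B x \<and> v \<in> B x" using TD by (simp add: tree_decomp_def)
lemma bags_connected: "v \<in> V \<Longrightarrow> tree_conn TE {x \<in> N. v \<in> B x}" using TD by (simp add: tree_decomp_def)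
lemma finite_bag: "x \<in> N \<Longrightarrow> finite (B x)" using bag_subset finV finite_subset by blast

definition below :: "nat \<Rightarrow> nat \<Rightarrow> 'a set" where
  "below t p = (\<Union>s\<in>tcomp TE t p. B s) - B p"

abbreviation low_cut_tree :: "'a btree \<Rightarrow> bool" where
  "low_cut_tree \<equiv> hierarchy (\<lambda>A. mm V E A \<le> w)"

lemma tree_edge_nodes: "{a,b} \<in> TE \<Longrightarrow> a \<in> N \<and> b \<in> N \<and> a \<noteq> b"
  using proper_edge[OF ok] by blast

text \<open>A vertex whose bags lie on both sides of the tree edge {t,p} belongs to B t and B p,
  because its bags form a connected subtree.\<close>
lemma bag_crossing_edge:
  assumes e: "{t,p} \<in> TE" and v: "v \<in> V" and x: "x \<in> N" "v \<in> B x" "x \<in> tcomp TE t p"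
    and y: "y \<in> N" "v \<in> B y" "y \<notin> tcomp TE t p"
  shows "v \<in> B t \<and> v \<in> B p"
proof -
  let ?S = "{x \<in> N. v \<in> B x}"
  have "(x,y) \<in> (edge_rel TE \<inter> ?S \<times> ?S)\<^sup>*" using bags_connected[OF v] x y by (simp add: tree_conn_reach)
  then obtain u z where uz: "(u,z) \<in> edge_rel TE \<inter> ?S \<times> ?S" "u \<in> tcomp TE t p" "z \<notin> tcomp TE t p"
    using path_leaves_set[of x y _ "tcomp TE t p"] x(3) y(3) by blast
  have "{u,z} = {t,p}"
  proof (rule ccontr)
    assume "{u,z} \<noteq> {t,p}"
    then have "(u,z) \<in> edge_rel (TE - {{t,p}})" using uz(1) by simp
    moreover have "(t,u) \<in> (edge_rel (TE - {{t,p}}))\<^sup>*" using uz(2) by (simp add: tcomp_reach)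
    ultimately have "(t,z) \<in> (edge_rel (TE - {{t,p}}))\<^sup>*" by (rule rtrancl_into_rtrancl[rotated])
    then show False using uz(3) by (simp add: tcomp_reach)
  qed
  moreover have "p \<notin> tcomp TE t p" using tcomp_excludes_other_end[OF T e] .
  ultimately have "u = t" "z = p" using uz(2) by (auto simp: doubleton_eq_iff)
  then show ?thesis using uz(1) by auto
qed

lemma below_subset: "{t,p} \<in> TE \<Longrightarrow> below t p \<subseteq> V"
  using bag_subset tcomp_subset[OF T] tree_edge_nodes unfolding below_def by blast

lemma below_bags_local:
  assumes c: "c \<in> tnbrs TE t" and u: "u \<in> below c t" and s: "s \<in> N" "u \<in> B s"
  shows "s \<in> tcomp TE c t"
proof (rule ccontr)
  assume ns: "s \<notin> tcomp TE c t"
  have e: "{c,t} \<in> TE" using c by (simp add: tnbrs_def insert_commute)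
  obtain s0 where s0: "s0 \<in> tcomp TE c t" "u \<in> B s0" "u \<notin> B t" using u by (auto simp: below_def)
  have s0N: "s0 \<in> N" using tcomp_subset[OF T] tree_edge_nodes[OF e] s0(1) by blast
  have "u \<in> V" using bag_subset[OF s0N] s0(2) by blast
  from bag_crossing_edge[OF e this s0N s0(2) s0(1) s ns] s0(3) show False by simp
qed

text \<open>Main counting step: if every vertex of A outside B t comes with a whole part below t
  inside A, then every edge leaving A touches B t, so mm A <= |B t| <= w.\<close>
lemma mm_le_bag:
  assumes t: "t \<in> N" and C: "C \<subseteq> tnbrs TE t" and A: "A \<subseteq> V"
    and hyp: "\<forall>u\<in>A - B t. \<exists>c\<in>C. u \<in> below c t \<and> below c t \<subseteq> A"
  shows "mm V E A \<le> w"
proof -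
  have "mm V E A \<le> card (B t)"
  proof (rule mm_le_cover[OF finV A finite_bag[OF t]], intro allI impI)
    fix u v assume uv: "u \<in> A" "v \<in> V - A" "E u v"
    show "u \<in> B t \<or> v \<in> B t"
    proof (rule ccontr)
      assume not_bag: "\<not> (u \<in> B t \<or> v \<in> B t)"
      then obtain c where c: "c \<in> C" "u \<in> below c t" "below c t \<subseteq> A" using hyp uv(1) by blast
      obtain s where s: "s \<in> N" "u \<in> B s" "v \<in> B s" using edge_in_bag[OF uv(3)] by blast
      have "s \<in> tcomp TE c t" using below_bags_local[OF _ c(2) s(1,2)] c(1) C by blast
      then have "v \<in> below c t" using s(3) not_bag by (auto simp: below_def)
      then show False using c(3) uv(2) by blast
    qed
  qed
  then show ?thesis using bag t by (meson le_trans)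
qed

lemma below_decomp:
  assumes e: "{t,p} \<in> TE"
  shows "below t p = (B t - B p) \<union> (\<Union>c\<in>tnbrs TE t - {p}. below c t)"
proof
  have t2: "tcomp TE t p = insert t (\<Union>c\<in>tnbrs TE t - {p}. tcomp TE c t)" using tcomp_children[OF T e] .
  show "below t p \<subseteq> (B t - B p) \<union> (\<Union>c\<in>tnbrs TE t - {p}. below c t)"
  proof
    fix v assume "v \<in> below t p"
    then obtain s where s: "s \<in> tcomp TE t p" "v \<in> B s" "v \<notin> B p" by (auto simp: below_def)
    show "v \<in> (B t - B p) \<union> (\<Union>c\<in>tnbrs TE t - {p}. below c t)"
    proof (cases "v \<in> B t")
      case True then show ?thesis using s by auto
    next
      case False
      then have "s \<noteq> t" using s by auto
      then obtain c where "c \<in> tnbrs TE t - {p}" "s \<in> tcomp TE c t" using s(1) t2 by auto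
      then show ?thesis using s False by (auto simp: below_def)
    qed
  qed
  show "(B t - B p) \<union> (\<Union>c\<in>tnbrs TE t - {p}. below c t) \<subseteq> below t p"
  proof
    fix v assume "v \<in> (B t - B p) \<union> (\<Union>c\<in>tnbrs TE t - {p}. below c t)"
    then show "v \<in> below t p"
    proof
      assume "v \<in> B t - B p" then show ?thesis using tcomp_self[of t TE p] by (auto simp: below_def)
    next
      assume "v \<in> (\<Union>c\<in>tnbrs TE t - {p}. below c t)"
      then obtain c s where c: "c \<in> tnbrs TE t" "c \<noteq> p" "s \<in> tcomp TE c t" "v \<in> B s" "v \<notin> B t"
        by (auto simp: below_def)
      have sp: "s \<in> tcomp TE t p" using t2 c by blast
      have tN: "t \<in> N" "p \<in> N" using tree_edge_nodes[OF e] by auto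
      have sN: "s \<in> N" using tcomp_subset[OF T tN(1)] sp by blast
      have vV: "v \<in> V" using bag_subset[OF sN] c(4) by blast
      have "v \<notin> B p"
      proof
        assume "v \<in> B p"
        from bag_crossing_edge[OF e vV sN c(4) sp tN(2) this tcomp_excludes_other_end[OF T e]] c(5) show False by simp
      qed
      then show ?thesis using sp c(4) by (auto simp: below_def)
    qed
  qed
qed

lemma below_disjoint:
  assumes c: "c \<in> tnbrs TE t" "c' \<in> tnbrs TE t" "c \<noteq> c'"
  shows "below c t \<inter> below c' t = {}"
proof (rule ccontr)
  assume "below c t \<inter> below c' t \<noteq> {}"
  then obtain v where v: "v \<in> below c t" "v \<in> below c' t" by blast
  obtain s' where s': "s' \<in> tcomp TE c' t" "v \<in> B s'" using v(2) by (auto simp: below_def)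
  have e': "{c',t} \<in> TE" using c(2) by (simp add: tnbrs_def insert_commute)
  have s'N: "s' \<in> N" using tcomp_subset[OF T] tree_edge_nodes[OF e'] s'(1) by blast
  have "s' \<in> tcomp TE c t" using below_bags_local[OF c(1) v(1) s'N s'(2)] .
  then show False using tcomp_children_disjoint[OF T c] s'(1) by blast
qed

lemma below_bag_disjoint: "below c t \<inter> B t = {}" by (auto simp: below_def)

lemma low_cut_leaf:
  assumes t: "t \<in> N" and v: "v \<in> B t" shows "low_cut_tree (Lf v)"
proof -
  have "mm V E {v} \<le> w" by (rule mm_le_bag[OF t, of "{}"]) (use v bag_subset[OF t] in auto)
  then show ?thesis by (simp add: hierarchy_def)
qed

text \<open>At node t, hierarchies for the parts below some children and for single vertices of
  B t combine into one hierarchy; all unions of these pieces are separated from the rest by B t.\<close>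
lemma assemble_at_node:
  assumes t: "t \<in> N" and C: "C \<subseteq> tnbrs TE t" and D: "D \<subseteq> B t"
    and IH: "\<forall>c\<in>C. below c t = {} \<or> (\<exists>T. low_cut_tree T \<and> leaves T = below c t)"
  shows "D \<union> (\<Union>c\<in>C. below c t) = {} \<or> (\<exists>T. low_cut_tree T \<and> leaves T = D \<union> (\<Union>c\<in>C. below c t))"
proof -
  let ?F = "(\<lambda>c. below c t) ` {c\<in>C. below c t \<noteq> {}} \<union> (\<lambda>v. {v}) ` D"
  have union: "\<Union>?F = D \<union> (\<Union>c\<in>C. below c t)" by auto
  have below_sub: "below c t \<subseteq> V" if "c \<in> C" for c
    using below_subset[of c t] that C by (simp add: tnbrs_edge subset_iff)
  have pieces: "\<forall>A\<in>?F. \<exists>T. low_cut_tree T \<and> leaves T = A"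
  proof
    fix A assume "A \<in> ?F"
    then consider c where "c \<in> C" "below c t \<noteq> {}" "A = below c t" | v where "v \<in> D" "A = {v}"
      by blast
    then show "\<exists>T. low_cut_tree T \<and> leaves T = A"
    proof cases
      case 1 then show ?thesis using IH by blast
    next
      case (2 v) then show ?thesis using low_cut_leaf[OF t, of v] D by (intro exI[of _ "Lf v"]) auto
    qed
  qed
  have disjoint: "\<forall>A\<in>?F. \<forall>A'\<in>?F. A \<noteq> A' \<longrightarrow> A \<inter> A' = {}"
  proof (intro ballI impI)
    fix A A' assume A: "A \<in> ?F" and A': "A' \<in> ?F" and ne: "A \<noteq> A'"
    have apart: "below c t \<inter> {v} = {}" if "v \<in> D" for c v
      using below_bag_disjoint[of c t] that D by blast
    from A A' ne show "A \<inter> A' = {}"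
      using below_disjoint[of _ t] apart C by (elim UnE imageE) (auto, blast+)
  qed
  have unions: "mm V E (\<Union>G) \<le> w" if G: "G \<subseteq> ?F" for G
  proof (rule mm_le_bag[OF t C])
    show "\<Union>G \<subseteq> V" using G below_sub D bag_subset[OF t] by blast
    show "\<forall>u\<in>\<Union>G - B t. \<exists>c\<in>C. u \<in> below c t \<and> below c t \<subseteq> \<Union>G"
    proof
      fix u assume u: "u \<in> \<Union>G - B t"
      then obtain A where "A \<in> G" "u \<in> A" by blast
      moreover have "A \<notin> (\<lambda>v. {v}) ` D" using u \<open>u \<in> A\<close> D by blast
      ultimately obtain c where "c \<in> C" "A = below c t" using G by blast
      then show "\<exists>c\<in>C. u \<in> below c t \<and> below c t \<subseteq> \<Union>G" using \<open>A \<in> G\<close> \<open>u \<in> A\<close> by blast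
    qed
  qed
  have "finite ?F" using finite_tnbrs[OF ok finN] C finite_bag[OF t] D by (auto intro: finite_subset)
  then show ?thesis
    using hierarchy_comb[OF _ _ pieces disjoint] unions union by (cases "?F = {}") auto
qed

lemma below_has_tree:
  "{t,p} \<in> TE \<Longrightarrow> below t p = {} \<or> (\<exists>T. low_cut_tree T \<and> leaves T = below t p)"
proof (induction "card (tcomp TE t p)" arbitrary: t p rule: less_induct)
  case less
  let ?C = "tnbrs TE t - {p}"
  have IH: "\<forall>c\<in>?C. below c t = {} \<or> (\<exists>T. low_cut_tree T \<and> leaves T = below c t)"
  proof
    fix c assume c: "c \<in> ?C"
    have ec: "{c,t} \<in> TE" using c by (simp add: tnbrs_def insert_commute)
    show "below c t = {} \<or> (\<exists>T. low_cut_tree T \<and> leaves T = below c t)"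
      by (rule less.hyps[OF tcomp_child_smaller[OF T less.prems] ec]) (use c in auto)
  qed
  have "B t - B p \<subseteq> B t" by blast
  from assemble_at_node[OF _ _ this IH] tree_edge_nodes[OF less.prems] below_decomp[OF less.prems] show ?case by auto
qed

lemma vertices_have_tree:
  assumes r: "r \<in> N" and Vne: "V \<noteq> {}"
  shows "\<exists>T. low_cut_tree T \<and> leaves T = V"
proof -
  have IH: "\<forall>c\<in>tnbrs TE r. below c r = {} \<or> (\<exists>T. low_cut_tree T \<and> leaves T = below c r)"
    using below_has_tree by (simp add: tnbrs_def insert_commute)
  have "V = B r \<union> (\<Union>c\<in>tnbrs TE r. below c r)"
  proof
    show "B r \<union> (\<Union>c\<in>tnbrs TE r. below c r) \<subseteq> V"
      using bag_subset[OF r] below_subset by (auto simp: tnbrs_def insert_commute)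
    show "V \<subseteq> B r \<union> (\<Union>c\<in>tnbrs TE r. below c r)"
    proof
      fix v assume "v \<in> V"
      then obtain x where x: "x \<in> N" "v \<in> B x" using bags_cover by blast
      show "v \<in> B r \<union> (\<Union>c\<in>tnbrs TE r. below c r)"
      proof (cases "v \<in> B r")
        case False
        then have "x \<noteq> r" using x by auto
        then obtain c where "c \<in> tnbrs TE r" "x \<in> tcomp TE c r" using nodes_around_root[OF T r] x(1) by auto
        then show ?thesis using x False by (auto simp: below_def)
      qed simp
    qed
  qed
  with assemble_at_node[OF r subset_refl subset_refl IH] Vne show ?thesis by auto
qed

end

lemma trivial_tree_decomp:
  assumes G: "graph V E" shows "tree_decomp V E {0} {} (\<lambda>_. V)"
proof -
  have "is_tree {0} {}" by (simp add: is_tree_def tree_conn_def)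
  moreover have "tree_conn {} S" if "S \<subseteq> {0::nat}" for S using that by (auto simp: tree_conn_def)
  ultimately show ?thesis using graph_in[OF G] by (auto simp: tree_decomp_def)
qed

lemma exists_low_cut_tree:
  assumes G: "graph V E" and Vne: "V \<noteq> {}" and TD: "tree_decomp V E N TE B" and bag: "\<forall>x\<in>N. card (B x) \<le> w"
  shows "\<exists>T. hierarchy (\<lambda>A. mm V E A \<le> w) T \<and> leaves T = V"
proof -
  interpret bounded_tree_decomp V E N TE B w using G TD bag by unfold_locales
  obtain r where "r \<in> N" using TD by (auto simp: tree_decomp_def)
  from vertices_have_tree[OF this Vne] show ?thesis .
qed

lemma empty_bd: "branch_decomp {} {} {} f"
  by (simp add: branch_decomp_def is_tree_def tree_conn_def tleaves_def bij_betw_def)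

lemma empty_bd_width: "bd_sm_width V E {} {} f = 0"
  by (simp add: bd_sm_width_def)

text \<open>The branch decomposition of a hierarchy with cuts of matching size at most k >= 1 has
  width at most k: each cut is a subtree leaf set or its complement.\<close>
lemma btree_width_le:
  assumes G: "graph V E" and H: "hierarchy (\<lambda>A. mm V E A \<le> k) T" and lv: "leaves T = V"
    and k: "1 \<le> k"
  shows "bd_sm_width V E (bnodes 0 T) (bedges 0 T) (blabel 0 T) \<le> k"
  unfolding bd_sm_width_def
proof (rule Sup_nat_le)
  show "finite {sm V E (blabel 0 T ` (tleaves (bnodes 0 T) (bedges 0 T) \<inter> tcomp (bedges 0 T) a b)) | a b. {a, b} \<in> bedges 0 T}"
    by (rule cuts_finite[OF finite_bnodes bedges_proper])
  show "\<forall>x\<in>{sm V E (blabel 0 T ` (tleaves (bnodes 0 T) (bedges 0 T) \<inter> tcomp (bedges 0 T) a b)) | a b. {a, b} \<in> bedges 0 T}. x \<le> k"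
  proof (clarify)
    fix a b assume e: "{a,b} \<in> bedges 0 T"
    obtain s where s: "s \<in> subtrees T" and X: "blabel 0 T ` (tleaves (bnodes 0 T) (bedges 0 T) \<inter> tcomp (bedges 0 T) a b) \<in> {leaves s, leaves T - leaves s}"
      using btree_cut_sides[OF _ e] H by (auto simp: hierarchy_def)
    have sV: "leaves s \<subseteq> V" using subtrees_leaves[OF s] lv by simp
    have "mm V E (leaves s) \<le> k" using H s by (simp add: hierarchy_def)
    moreover have "mm V E (V - leaves s) = mm V E (leaves s)" by (rule mm_complement[OF G sV])
    ultimately have "mm V E (blabel 0 T ` (tleaves (bnodes 0 T) (bedges 0 T) \<inter> tcomp (bedges 0 T) a b)) \<le> k"
      using X lv by auto
    then show "sm V E (blabel 0 T ` (tleaves (bnodes 0 T) (bedges 0 T) \<inter> tcomp (bedges 0 T) a b)) \<le> k"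
      using sm_le[of V E] k by (meson le_trans max.bounded_iff)
  qed
qed

lemma smw_le_width:
  assumes "branch_decomp V N TE f" "bd_sm_width V E N TE f \<le> k"
  shows "smw V E \<le> k"
proof -
  have "smw V E \<le> bd_sm_width V E N TE f" unfolding smw_def
    by (rule Least_le) (use assms(1) in blast)
  then show ?thesis using assms(2) by simp
qed

lemma exists_branch_decomp:
  assumes G: "graph V E" shows "\<exists>N TE f. branch_decomp V N TE f"
proof (cases "V = {}")
  case True then show ?thesis using empty_bd by blast
next
  case False
  have "\<forall>x\<in>{0::nat}. card ((\<lambda>_. V) x) \<le> card V" by simp
  from exists_low_cut_tree[OF G False trivial_tree_decomp[OF G] this]
  obtain T where "hierarchy (\<lambda>A. mm V E A \<le> card V) T" "leaves T = V" by blast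
  then show ?thesis using branch_decomp_btree by (metis hierarchy_def)
qed

lemma smw_le_bag_size:
  assumes G: "graph V E" and TD: "tree_decomp V E N TE B" and bag: "\<forall>x\<in>N. card (B x) \<le> w"
  shows "smw V E \<le> w"
proof (cases "V = {}")
  case True
  then have "branch_decomp V {} {} f" for f :: "nat \<Rightarrow> 'a" using empty_bd by simp
  then show ?thesis using smw_le_width[of V "{}" "{}" _ E w] by (simp add: empty_bd_width)
next
  case False
  then obtain v x where x: "x \<in> N" "v \<in> B x" using TD by (auto simp: tree_decomp_def)
  have "finite (B x)" using TD x graph_fin[OF G] finite_subset by (auto simp: tree_decomp_def)
  then have "1 \<le> w" using x bag by (metis One_nat_def Suc_leI card_gt_0_iff empty_iff le_trans)
  obtain T where T: "hierarchy (\<lambda>A. mm V E A \<le> w) T" "leaves T = V"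
    using exists_low_cut_tree[OF G False TD bag] by blast
  have "branch_decomp V (bnodes 0 T) (bedges 0 T) (blabel 0 T)"
    using branch_decomp_btree T by (auto simp: hierarchy_def)
  then show ?thesis by (rule smw_le_width[OF _ btree_width_le[OF G T \<open>1 \<le> w\<close>]])
qed

lemma optimal_tree_decomp:
  assumes G: "graph V E"
  obtains N TE B w where "tree_decomp V E N TE B" "\<forall>x\<in>N. card (B x) \<le> w" "int w = treewidth V E + 1"
proof -
  let ?P = "\<lambda>k. \<exists>N TE B. tree_decomp V E N TE B \<and> Max (card ` B ` N) = k"
  have "?P (card V)" using trivial_tree_decomp[OF G] by fastforce
  then have "?P (Least ?P)" by (rule LeastI)
  then obtain N TE B where td: "tree_decomp V E N TE B" and mx: "Max (card ` B ` N) = Least ?P" by blast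
  have "finite N" using td by (auto simp: tree_decomp_def is_tree_def)
  then have "\<forall>x\<in>N. card (B x) \<le> Least ?P" using mx by (metis Max_ge finite_imageI image_eqI)
  moreover have "int (Least ?P) = treewidth V E + 1" by (simp add: treewidth_def)
  ultimately show thesis using that td by blast
qed

lemma smw_le_treewidth:
  assumes G: "graph V E" shows "int (smw V E) \<le> treewidth V E + 1"
proof -
  obtain N TE B w where "tree_decomp V E N TE B" "\<forall>x\<in>N. card (B x) \<le> w" "int w = treewidth V E + 1"
    using optimal_tree_decomp[OF G] by blast
  then show ?thesis using smw_le_bag_size[OF G] by fastforce
qed

section \<open>Clique-width expressions\<close>

fun relabel_each :: "nat list \<Rightarrow> (nat \<Rightarrow> nat) \<Rightarrow> 'a cwexp \<Rightarrow> 'a cwexp" where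
  "relabel_each [] g e = e"
| "relabel_each (i # is) g e = CRelab i (g i) (relabel_each is g e)"

fun join_each :: "(nat \<times> nat) list \<Rightarrow> 'a cwexp \<Rightarrow> 'a cwexp" where
  "join_each [] e = e"
| "join_each ((i,j) # ps) e = CJoin i j (join_each ps e)"

lemma relabel_each_verts [simp]: "cw_verts (relabel_each ls g e) = cw_verts e"
  by (induction ls) auto

lemma relabel_each_edges [simp]: "cw_edges (relabel_each ls g e) = cw_edges e"
  by (induction ls) auto

lemma relabel_each_lab:
  "distinct ls \<Longrightarrow> (\<forall>i\<in>set ls. g i \<notin> set ls) \<Longrightarrow>
   cw_lab (relabel_each ls g e) x = (if cw_lab e x \<in> set ls then g (cw_lab e x) else cw_lab e x)"
  by (induction ls) auto

lemma relabel_each_ok: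
  "cw_ok K e \<Longrightarrow> (\<forall>i\<in>set ls. i < K \<and> g i < K) \<Longrightarrow> cw_ok K (relabel_each ls g e)"
  by (induction ls) auto

lemma join_each_verts [simp]: "cw_verts (join_each ps e) = cw_verts e"
  by (induction ps e rule: join_each.induct) auto

lemma join_each_lab [simp]: "cw_lab (join_each ps e) = cw_lab e"
  by (induction ps e rule: join_each.induct) auto

lemma join_each_edges:
  "cw_edges (join_each ps e) x y = (cw_edges e x y \<or> (x \<in> cw_verts e \<and> y \<in> cw_verts e \<and>
     (\<exists>(i,j)\<in>set ps. (cw_lab e x = i \<and> cw_lab e y = j) \<or> (cw_lab e x = j \<and> cw_lab e y = i))))"
  by (induction ps e rule: join_each.induct) auto

lemma join_each_ok:
  "cw_ok K e \<Longrightarrow> (\<forall>(i,j)\<in>set ps. i < K \<and> j < K \<and> i \<noteq> j) \<Longrightarrow> cw_ok K (join_each ps e)"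
  by (induction ps e rule: join_each.induct) auto

lemma cw_ok_lab: "cw_ok K e \<Longrightarrow> x \<in> cw_verts e \<Longrightarrow> cw_lab e x < K"
  by (induction e) auto

text \<open>Joining across two disjointly labelled sides: if adjacency between the sides only depends
  on the labels, joining all label pairs of adjacent cross pairs creates exactly the cross edges.\<close>
lemma join_across:
  assumes ok: "cw_ok K u" and verts: "cw_verts u = X1 \<union> X2" and fin: "finite X1" "finite X2"
    and edges: "cw_edges u = (\<lambda>x y. (x \<in> X1 \<and> y \<in> X1 \<or> x \<in> X2 \<and> y \<in> X2) \<and> E x y)"
    and sep: "cw_lab u ` X1 \<inter> cw_lab u ` X2 = {}"
    and homog: "\<And>x x' y y'. x \<in> X1 \<Longrightarrow> x' \<in> X1 \<Longrightarrow> y \<in> X2 \<Longrightarrow> y' \<in> X2 \<Longrightarrow>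
       cw_lab u x = cw_lab u x' \<Longrightarrow> cw_lab u y = cw_lab u y' \<Longrightarrow> E x y \<Longrightarrow> E x' y'"
    and sym: "\<And>x y. E x y \<Longrightarrow> E y x"
  shows "\<exists>e. cw_ok K e \<and> cw_verts e = X1 \<union> X2 \<and> cw_lab e = cw_lab u
           \<and> cw_edges e = (\<lambda>x y. x \<in> X1 \<union> X2 \<and> y \<in> X1 \<union> X2 \<and> E x y)"
proof -
  let ?L = "cw_lab u"
  let ?P = "{(?L x, ?L y) | x y. x \<in> X1 \<and> y \<in> X2 \<and> E x y}"
  have "?P \<subseteq> (\<lambda>(x,y). (?L x, ?L y)) ` (X1 \<times> X2)" by auto
  then have "finite ?P" using fin by (meson finite_SigmaI finite_imageI finite_subset)
  from finite_list[OF this] obtain ps where ps: "set ps = ?P" ..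
  have apart: "?L x \<noteq> ?L y" if "x \<in> X1" "y \<in> X2" for x y
  proof
    assume "?L x = ?L y"
    then have "?L x \<in> ?L ` X2" using that(2) by (metis image_eqI)
    moreover have "?L x \<in> ?L ` X1" using that(1) by simp
    ultimately show False using sep by blast
  qed
  have X1: "x \<in> X1" if "x \<in> X1 \<union> X2" "?L x = ?L x0" "x0 \<in> X1" for x x0
    using that apart[of x0 x] by auto
  have X2: "y \<in> X2" if "y \<in> X1 \<union> X2" "?L y = ?L y0" "y0 \<in> X2" for y y0
    using that apart[of y y0] by auto
  have cross: "(\<exists>(i,j)\<in>set ps. ?L x = i \<and> ?L y = j) \<longleftrightarrow> x \<in> X1 \<and> y \<in> X2 \<and> E x y"
    if "x \<in> X1 \<union> X2" "y \<in> X1 \<union> X2" for x y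
  proof
    assume "\<exists>(i,j)\<in>set ps. ?L x = i \<and> ?L y = j"
    then obtain x0 y0 where xy0: "x0 \<in> X1" "y0 \<in> X2" "E x0 y0" "?L x = ?L x0" "?L y = ?L y0"
      using ps by auto
    have "x \<in> X1" "y \<in> X2" using X1[OF that(1) xy0(4,1)] X2[OF that(2) xy0(5,2)] by auto
    moreover have "E x y" using homog[OF xy0(1) \<open>x \<in> X1\<close> xy0(2) \<open>y \<in> X2\<close>] xy0(3-5) by simp
    ultimately show "x \<in> X1 \<and> y \<in> X2 \<and> E x y" by blast
  qed (use ps in auto)
  have "cw_edges (join_each ps u) = (\<lambda>x y. x \<in> X1 \<union> X2 \<and> y \<in> X1 \<union> X2 \<and> E x y)"
  proof (intro ext)
    fix x y
    show "cw_edges (join_each ps u) x y = (x \<in> X1 \<union> X2 \<and> y \<in> X1 \<union> X2 \<and> E x y)"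
    proof (cases "x \<in> X1 \<union> X2 \<and> y \<in> X1 \<union> X2")
      case True
      have "(\<exists>(i,j)\<in>set ps. (?L x = i \<and> ?L y = j) \<or> (?L x = j \<and> ?L y = i))
          \<longleftrightarrow> (\<exists>(i,j)\<in>set ps. ?L x = i \<and> ?L y = j) \<or> (\<exists>(i,j)\<in>set ps. ?L y = i \<and> ?L x = j)"
        by blast
      also have "\<dots> \<longleftrightarrow> (x \<in> X1 \<and> y \<in> X2 \<and> E x y) \<or> (y \<in> X1 \<and> x \<in> X2 \<and> E y x)"
        using cross[of x y] cross[of y x] True by simp
      finally show ?thesis unfolding join_each_edges verts edges using True sym by blast
    qed (auto simp: join_each_edges verts edges)
  qed
  moreover have "cw_ok K (join_each ps u)"
  proof (rule join_each_ok[OF ok])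
    note apart
    moreover have "?L x < K" if "x \<in> X1 \<union> X2" for x
      using cw_ok_lab[OF ok] that verts by blast
    ultimately show "\<forall>(i,j)\<in>set ps. i < K \<and> j < K \<and> i \<noteq> j" using ps by auto
  qed
  ultimately show ?thesis using verts by (intro exI[of _ "join_each ps u"]) auto
qed

text \<open>Relabelling by classes: if the labels (all below 2D) of an expression on a finite set X
  determine a function \<kappa> with at most D values, a (3D)-expression with the same graph can use
  labels below D that determine \<kappa> (labels 2D..<3D serve as scratch space).\<close>
lemma relabel_by_classes:
  assumes ok: "cw_ok (3*D) e" and verts: "cw_verts e = X" and fin: "finite X"
    and low: "\<forall>x\<in>X. cw_lab e x < 2*D"
    and det: "\<forall>x\<in>X. \<forall>y\<in>X. cw_lab e x = cw_lab e y \<longrightarrow> \<kappa> x = \<kappa> y"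
    and few: "card (\<kappa> ` X) \<le> D" and D: "1 \<le> D"
  shows "\<exists>e'. cw_ok (3*D) e' \<and> cw_verts e' = X \<and> cw_edges e' = cw_edges e
           \<and> (\<forall>x\<in>X. cw_lab e' x < D)
           \<and> (\<forall>x\<in>X. \<forall>y\<in>X. cw_lab e' x = cw_lab e' y \<longrightarrow> \<kappa> x = \<kappa> y)"
proof -
  let ?K = "\<kappa> ` X"
  obtain h where h: "bij_betw h ?K {0..<card ?K}" using ex_bij_betw_finite_nat[of ?K] fin by blast
  have hD: "h k < D" if "k \<in> ?K" for k
  proof -
    have "h k \<in> {0..<card ?K}" using h that by (auto simp: bij_betw_def)
    then show ?thesis using few by simp
  qed
  define rep where "rep l = (SOME x. x \<in> X \<and> cw_lab e x = l)" for l
  have rep: "rep (cw_lab e x) \<in> X \<and> cw_lab e (rep (cw_lab e x)) = cw_lab e x" if "x \<in> X" for x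
    unfolding rep_def by (rule someI) (use that in auto)
  text \<open>Step 1 moves every label l below 2D to 2D + (index of the class of l); step 2 shifts down.\<close>
  define g where "g l = 2*D + (if \<kappa> (rep l) \<in> ?K then h (\<kappa> (rep l)) else 0)" for l
  define e1 where "e1 = relabel_each [0..<2*D] g e"
  define e2 where "e2 = relabel_each [2*D..<3*D] (\<lambda>m. m - 2*D) e1"
  have g: "g (cw_lab e x) = 2*D + h (\<kappa> x)" if "x \<in> X" for x
  proof -
    have r: "rep (cw_lab e x) \<in> X" "cw_lab e (rep (cw_lab e x)) = cw_lab e x" using rep[OF that] by auto
    then have "\<kappa> (rep (cw_lab e x)) = \<kappa> x" using det that by blast
    then show ?thesis using r(1) that by (simp add: g_def)
  qed
  have lab1: "cw_lab e1 x = 2*D + h (\<kappa> x)" if "x \<in> X" for x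
    unfolding e1_def using low that g by (subst relabel_each_lab) (auto simp: g_def)
  have lab2: "cw_lab e2 x = h (\<kappa> x)" if "x \<in> X" for x
    unfolding e2_def using lab1 hD that by (subst relabel_each_lab) auto
  have "cw_ok (3*D) e1" unfolding e1_def
    by (rule relabel_each_ok[OF ok]) (use hD D in \<open>auto simp: g_def\<close>)
  then have "cw_ok (3*D) e2" unfolding e2_def by (rule relabel_each_ok) auto
  moreover have "\<kappa> x = \<kappa> y" if "x \<in> X" "y \<in> X" "cw_lab e2 x = cw_lab e2 y" for x y
  proof -
    have "h (\<kappa> x) = h (\<kappa> y)" using that lab2 by simp
    moreover have "inj_on h ?K" using h by (simp add: bij_betw_def)
    ultimately show ?thesis using that by (meson image_eqI inj_onD)
  qed
  moreover have "cw_lab e2 x < D" if "x \<in> X" for x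
    using lab2[OF that] hD[of "\<kappa> x"] that by simp
  moreover have "cw_verts e2 = X" "cw_edges e2 = cw_edges e" using verts by (simp_all add: e2_def e1_def)
  ultimately show ?thesis by blast
qed

definition outer_nbrs :: "'a set \<Rightarrow> ('a \<Rightarrow> 'a \<Rightarrow> bool) \<Rightarrow> 'a set \<Rightarrow> 'a \<Rightarrow> 'a set" where
  "outer_nbrs V E X x = {z \<in> V - X. E x z}"

lemma outer_nbrs_subset:
  assumes "X1 \<subseteq> X" "x \<in> X1" shows "outer_nbrs V E X x = outer_nbrs V E X1 x \<inter> (V - X)"
  using assms by (auto simp: outer_nbrs_def)

lemma outer_nbrs_adjacent:
  assumes "outer_nbrs V E X x = outer_nbrs V E X x'" "y \<in> V" "y \<notin> X" "E x y"
  shows "E x' y"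
proof -
  have "y \<in> outer_nbrs V E X x" using assms(2-4) by (simp add: outer_nbrs_def)
  then have "y \<in> outer_nbrs V E X x'" using assms(1) by simp
  then show ?thesis by (simp add: outer_nbrs_def)
qed

definition class_expr :: "'a set \<Rightarrow> ('a \<Rightarrow> 'a \<Rightarrow> bool) \<Rightarrow> nat \<Rightarrow> 'a set \<Rightarrow> 'a cwexp \<Rightarrow> bool" where
  "class_expr V E D X e \<longleftrightarrow> cw_ok (3 * D) e \<and> cw_verts e = X \<and> cw_edges e = (\<lambda>x y. x \<in> X \<and> y \<in> X \<and> E x y)
     \<and> (\<forall>x\<in>X. cw_lab e x < D)
     \<and> (\<forall>x\<in>X. \<forall>y\<in>X. cw_lab e x = cw_lab e y \<longrightarrow> outer_nbrs V E X x = outer_nbrs V E X y)"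

lemma class_expr_vertex:
  assumes G: "graph V E" and D: "1 \<le> D" shows "class_expr V E D {v} (CVert v 0)"
  using D graph_irr[OF G] by (auto simp: class_expr_def fun_eq_iff)

lemma class_exprs_cross_adjacency:
  assumes G: "graph V E" and disj: "X1 \<inter> X2 = {}" and sub: "X1 \<union> X2 \<subseteq> V"
    and i1: "class_expr V E D X1 e1" and i2: "class_expr V E D X2 e2"
    and x: "x \<in> X1" "x' \<in> X1" and y: "y \<in> X2" "y' \<in> X2"
    and eq: "cw_lab e1 x = cw_lab e1 x'" "cw_lab e2 y = cw_lab e2 y'" and "E x y"
  shows "E x' y'"
proof -
  have o1: "outer_nbrs V E X1 x = outer_nbrs V E X1 x'" using i1 x eq(1) unfolding class_expr_def by blast
  have "E x' y" by (rule outer_nbrs_adjacent[OF o1]) (use \<open>E x y\<close> y sub disj in auto)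
  then have yx': "E y x'" by (rule graph_sym[OF G])
  have o2: "outer_nbrs V E X2 y = outer_nbrs V E X2 y'" using i2 y eq(2) unfolding class_expr_def by blast
  have "E y' x'" by (rule outer_nbrs_adjacent[OF o2]) (use yx' x sub disj in auto)
  then show "E x' y'" by (rule graph_sym[OF G])
qed

text \<open>Class expressions for two disjoint sets combine into one for their union, provided the union
  has at most D outer-neighbourhood classes: shift the labels of the second part by D, join across
  (adjacency across only depends on the classes), then relabel by the classes of the union.\<close>
lemma combine_class_exprs:
  assumes G: "graph V E" and disj: "X1 \<inter> X2 = {}" and sub: "X1 \<union> X2 \<subseteq> V"
    and i1: "class_expr V E D X1 e1" and i2: "class_expr V E D X2 e2"
    and cnt: "card (outer_nbrs V E (X1 \<union> X2) ` (X1 \<union> X2)) \<le> D" and D1: "1 \<le> D"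
  shows "\<exists>e. class_expr V E D (X1 \<union> X2) e"
proof -
  let ?X = "X1 \<union> X2"
  have fin: "finite X1" "finite X2" using sub graph_fin[OF G] finite_subset by auto
  have ok1: "cw_ok (3*D) e1" and v1: "cw_verts e1 = X1" and ed1: "cw_edges e1 = (\<lambda>x y. x \<in> X1 \<and> y \<in> X1 \<and> E x y)"
    and l1: "\<forall>x\<in>X1. cw_lab e1 x < D"
    and q1: "\<forall>x\<in>X1. \<forall>y\<in>X1. cw_lab e1 x = cw_lab e1 y \<longrightarrow> outer_nbrs V E X1 x = outer_nbrs V E X1 y"
    using i1 unfolding class_expr_def by blast+
  have ok2: "cw_ok (3*D) e2" and v2: "cw_verts e2 = X2" and ed2: "cw_edges e2 = (\<lambda>x y. x \<in> X2 \<and> y \<in> X2 \<and> E x y)"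
    and l2: "\<forall>x\<in>X2. cw_lab e2 x < D"
    and q2: "\<forall>x\<in>X2. \<forall>y\<in>X2. cw_lab e2 x = cw_lab e2 y \<longrightarrow> outer_nbrs V E X2 x = outer_nbrs V E X2 y"
    using i2 unfolding class_expr_def by blast+
  define u where "u = CUnion e1 (relabel_each [0..<D] (\<lambda>i. i + D) e2)"
  let ?L = "cw_lab u"
  have okU: "cw_ok (3*D) u" using ok1 ok2 v1 v2 disj by (simp add: u_def relabel_each_ok)
  have vU: "cw_verts u = ?X" using v1 v2 by (simp add: u_def)
  have LX1: "?L x = cw_lab e1 x" if "x \<in> X1" for x using v1 that by (simp add: u_def)
  have LX2: "?L x = cw_lab e2 x + D" if "x \<in> X2" for x
    using v1 disj l2 that by (auto simp: u_def relabel_each_lab)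
  have edU: "cw_edges u = (\<lambda>x y. (x \<in> X1 \<and> y \<in> X1 \<or> x \<in> X2 \<and> y \<in> X2) \<and> E x y)"
    using ed1 ed2 by (auto simp: u_def)
  have sep: "?L ` X1 \<inter> ?L ` X2 = {}"
    using LX1 LX2 l1 by fastforce
  have homog: "E x' y'" if x: "x \<in> X1" "x' \<in> X1" and y: "y \<in> X2" "y' \<in> X2"
    and eq: "?L x = ?L x'" "?L y = ?L y'" and "E x y" for x x' y y'
    using class_exprs_cross_adjacency[OF G disj sub i1 i2 x y] eq LX1 LX2 x y \<open>E x y\<close> by simp
  have "\<exists>e. cw_ok (3*D) e \<and> cw_verts e = ?X \<and> cw_lab e = ?L
           \<and> cw_edges e = (\<lambda>x y. x \<in> ?X \<and> y \<in> ?X \<and> E x y)"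
    using homog graph_sym[OF G] by (rule join_across[OF okU vU fin edU sep])
  then obtain e3 where e3: "cw_ok (3*D) e3" "cw_verts e3 = ?X" "cw_lab e3 = ?L"
      "cw_edges e3 = (\<lambda>x y. x \<in> ?X \<and> y \<in> ?X \<and> E x y)"
    by blast
  have low: "\<forall>x\<in>?X. cw_lab e3 x < 2*D" using e3(3) LX1 LX2 l1 l2 by auto
  have det: "outer_nbrs V E ?X x = outer_nbrs V E ?X y" if xy: "x \<in> ?X" "y \<in> ?X" "?L x = ?L y" for x y
  proof -
    have side: "?L z < D \<longleftrightarrow> z \<in> X1" if "z \<in> ?X" for z
      using that LX1 LX2 l1 disj by fastforce
    consider "x \<in> X1" "y \<in> X1" | "x \<in> X2" "y \<in> X2" using side[OF xy(1)] side[OF xy(2)] xy by auto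
    then show ?thesis
    proof cases
      case 1
      then have "cw_lab e1 x = cw_lab e1 y" using LX1 xy(3) by simp
      then have "outer_nbrs V E X1 x = outer_nbrs V E X1 y" using q1 1 by blast
      then show ?thesis using 1 outer_nbrs_subset[of X1 ?X] by simp
    next
      case 2
      then have "cw_lab e2 x = cw_lab e2 y" using LX2 xy(3) by simp
      then have "outer_nbrs V E X2 x = outer_nbrs V E X2 y" using q2 2 by blast
      then show ?thesis using 2 outer_nbrs_subset[of X2 ?X] by simp
    qed
  qed
  have "finite ?X" using fin by simp
  moreover have "\<forall>x\<in>?X. \<forall>y\<in>?X. cw_lab e3 x = cw_lab e3 y \<longrightarrow> outer_nbrs V E ?X x = outer_nbrs V E ?X y"
    unfolding e3(3) using det by blast
  ultimately obtain e where e: "cw_ok (3*D) e" "cw_verts e = ?X" "cw_edges e = cw_edges e3"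
      "\<forall>x\<in>?X. cw_lab e x < D"
      "\<forall>x\<in>?X. \<forall>y\<in>?X. cw_lab e x = cw_lab e y \<longrightarrow> outer_nbrs V E ?X x = outer_nbrs V E ?X y"
    using relabel_by_classes[OF e3(1,2) _ low _ cnt D1] by blast
  moreover have "cw_edges e = (\<lambda>x y. x \<in> ?X \<and> y \<in> ?X \<and> E x y)" using e(3) e3(4) by simp
  ultimately show ?thesis unfolding class_expr_def by blast
qed

section \<open>Part 2: bounded sm-width gives bounded clique-width\<close>

text \<open>For a split, all vertices of X with a neighbour outside share one outer neighbourhood.\<close>
lemma split_outer_classes:
  assumes split: "is_split V E X (V - X)"
  shows "card (outer_nbrs V E X ` X) \<le> 2"
proof -
  have eq: "outer_nbrs V E X x = outer_nbrs V E X y"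
    if "x \<in> X" "y \<in> X" "outer_nbrs V E X x \<noteq> {}" "outer_nbrs V E X y \<noteq> {}" for x y
  proof -
    have "\<exists>z\<in>V - X. E x z" "\<exists>z\<in>V - X. E y z" using that(3,4) by (auto simp: outer_nbrs_def)
    then have "{z \<in> V - X. E x z} = {z \<in> V - X. E y z}" using split that(1,2) unfolding is_split_def by blast
    then show ?thesis by (simp add: outer_nbrs_def)
  qed
  obtain x0 where "outer_nbrs V E X ` X \<subseteq> {{}, outer_nbrs V E X x0}"
  proof (cases "\<exists>x0\<in>X. outer_nbrs V E X x0 \<noteq> {}")
    case True
    then obtain x0 where "x0 \<in> X" "outer_nbrs V E X x0 \<noteq> {}" by blast
    then show thesis using that[of x0] eq by blast
  qed blast
  then have "card (outer_nbrs V E X ` X) \<le> card {{}, outer_nbrs V E X x0}" by (rule card_mono[rotated]) simp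
  also have "\<dots> \<le> 2" by (simp add: card_insert_le_m1)
  finally show ?thesis .
qed

text \<open>A vertex of X missed by a maximum matching of the cut has all its outer neighbours
  among the matched outer vertices (otherwise the matching could be enlarged).\<close>
lemma unmatched_outer_nbrs:
  assumes fin: "finite V" and X: "X \<subseteq> V" and M: "M \<in> matchings V E X" "card M = mm V E X"
    and x: "x \<in> X" "x \<notin> fst ` M"
  shows "outer_nbrs V E X x \<subseteq> snd ` M"
proof
  fix z assume z: "z \<in> outer_nbrs V E X x"
  show "z \<in> snd ` M"
  proof (rule ccontr)
    assume zn: "z \<notin> snd ` M"
    have "insert (x,z) M \<in> matchings V E X"
      using M(1) x z zn unfolding matchings_def cut_edges_def outer_nbrs_def
      by (auto simp: inj_on_insert image_iff)
    then have "card (insert (x,z) M) \<le> mm V E X" by (rule matching_le_mm[OF fin X])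
    moreover have "M \<subseteq> V \<times> V" using M(1) X by (auto simp: matchings_def cut_edges_def)
    then have "finite M" using fin finite_subset by blast
    moreover have "(x,z) \<notin> M" using x(2) by (auto simp: image_iff)
    ultimately show False using M(2) by simp
  qed
qed

text \<open>Hence without a split there are at most mm + 2^mm outer-neighbourhood classes: the
  neighbourhoods of matched vertices, and subsets of the matched outer vertices.\<close>
lemma matching_outer_classes:
  assumes fin: "finite V" and X: "X \<subseteq> V"
  shows "card (outer_nbrs V E X ` X) \<le> mm V E X + 2 ^ mm V E X"
proof -
  obtain M where M: "M \<in> matchings V E X" "card M = mm V E X" using max_matching_exists[OF fin X] by blast
  have "M \<subseteq> V \<times> V" using M(1) X by (auto simp: matchings_def cut_edges_def)
  then have finM: "finite M" using fin finite_subset by blast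
  have "outer_nbrs V E X ` X \<subseteq> outer_nbrs V E X ` fst ` M \<union> Pow (snd ` M)"
    using unmatched_outer_nbrs[OF fin X M] by blast
  then have "card (outer_nbrs V E X ` X) \<le> card (outer_nbrs V E X ` fst ` M \<union> Pow (snd ` M))"
    by (rule card_mono[rotated]) (use finM in simp)
  also have "\<dots> \<le> card (outer_nbrs V E X ` fst ` M) + card (Pow (snd ` M))" by (rule card_Un_le)
  also have "card (outer_nbrs V E X ` fst ` M) \<le> card M"
    using card_image_le[OF finM, of fst] card_image_le[of "fst ` M" "outer_nbrs V E X"] finM by simp
  also have "card (Pow (snd ` M)) = 2 ^ card (snd ` M)" using finM by (simp add: card_Pow)
  also have "(2::nat) ^ card (snd ` M) \<le> 2 ^ card M"
    using card_image_le[OF finM, of snd] by (intro power_increasing) auto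
  finally show ?thesis using M(2) by simp
qed

definition class_bound :: "nat \<Rightarrow> nat" where
  "class_bound k = 2^k + k + 2"

lemma outer_classes_bound:
  assumes G: "graph V E" and X: "X \<subseteq> V" and smk: "sm V E X \<le> k"
  shows "card (outer_nbrs V E X ` X) \<le> class_bound k"
proof (cases "is_split V E X (V - X)")
  case True
  then show ?thesis using split_outer_classes by (fastforce simp: class_bound_def)
next
  case False
  then have "mm V E X \<le> k" using smk by (simp add: sm_def)
  then have "mm V E X + 2 ^ mm V E X \<le> k + 2 ^ k" by (simp add: add_mono)
  moreover have "card (outer_nbrs V E X ` X) \<le> mm V E X + 2 ^ mm V E X"
    by (rule matching_outer_classes[OF graph_fin[OF G] X])
  ultimately show ?thesis by (simp add: class_bound_def)
qed

locale sm_bounded_decomp =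
  fixes V :: "'a set" and E and N and TE and f and k :: nat
  assumes G: "graph V E" and BD: "branch_decomp V N TE f"
    and cut: "\<And>a b. {a,b} \<in> TE \<Longrightarrow> sm V E (f ` (tleaves N TE \<inter> tcomp TE a b)) \<le> k"
begin

definition side :: "nat \<Rightarrow> nat \<Rightarrow> 'a set" where
  "side a b = f ` (tleaves N TE \<inter> tcomp TE a b)"

lemma T: "is_tree N TE" using BD by (simp add: branch_decomp_def)
lemma ok: "proper_edges N TE" using is_treeD[OF T] by simp
lemma finN: "finite N" using is_treeD[OF T] by simp
lemma bij: "bij_betw f (tleaves N TE) V" using BD by (simp add: branch_decomp_def)
lemma deg3: "x \<in> N \<Longrightarrow> tdegree TE x \<le> 3" using BD by (simp add: branch_decomp_def)
lemma leaves_nodes: "tleaves N TE \<subseteq> N" by (auto simp: tleaves_def)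
lemma class_bound_pos: "1 \<le> class_bound k" by (simp add: class_bound_def)

lemma side_subset: "side a b \<subseteq> V" using bij by (auto simp: side_def bij_betw_def)

lemma side_disjoint: "tcomp TE a b \<inter> tcomp TE c d = {} \<Longrightarrow> side a b \<inter> side c d = {}"
  using bij unfolding side_def bij_betw_def inj_on_def by blast

lemma side_classes:
  assumes "{a,b} \<in> TE" shows "card (outer_nbrs V E (side a b) ` side a b) \<le> class_bound k"
proof -
  have "sm V E (side a b) \<le> k" using cut[OF assms] by (simp add: side_def)
  then show ?thesis by (rule outer_classes_bound[OF G side_subset])
qed

text \<open>Every side has a class expression, by induction along the tree: a leaf side is a single
  vertex; an inner node of degree 3 combines the sides of its two children.\<close>
lemma side_has_class_expr: "{a,b} \<in> TE \<Longrightarrow> \<exists>e. class_expr V E (class_bound k) (side a b) e"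
proof (induction "card (tcomp TE a b)" arbitrary: a b rule: less_induct)
  case less
  have e: "{a,b} \<in> TE" by (rule less.prems)
  have aN: "a \<in> N" using proper_edge[OF ok e] by simp
  have bnb: "b \<in> tnbrs TE a" using e by (simp add: tnbrs_def)
  have cnb: "card (tnbrs TE a) = tdegree TE a" using tdegree_tnbrs[OF ok] by simp
  have finnb: "finite (tnbrs TE a)" using finite_tnbrs[OF ok finN] .
  let ?C = "tnbrs TE a - {b}"
  have t2: "tcomp TE a b = insert a (\<Union>c\<in>?C. tcomp TE c a)" using tcomp_children[OF T e] .
  have IH: "\<exists>e. class_expr V E (class_bound k) (side c a) e" if c: "c \<in> ?C" for c
  proof -
    have ec: "{c,a} \<in> TE" using c by (simp add: tnbrs_def insert_commute)
    show ?thesis by (rule less.hyps[OF tcomp_child_smaller[OF T e] ec]) (use c in auto)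
  qed
  show ?case
  proof (cases "a \<in> tleaves N TE")
    case True
    then have "card (tnbrs TE a) \<le> 1" using cnb by (simp add: tleaves_def)
    then have "tnbrs TE a = {b}" using bnb finnb by (metis card_le_Suc0_iff_eq One_nat_def singletonD subsetI subset_antisym singletonI)
    then have "tcomp TE a b = {a}" using t2 by simp
    then have "side a b = {f a}" using True by (auto simp: side_def)
    then show ?thesis using class_expr_vertex[OF G class_bound_pos] by metis
  next
    case False
    then have "tdegree TE a \<ge> 2" using aN by (auto simp: tleaves_def)
    then have cC: "card ?C \<ge> 1" "card ?C \<le> 2" using cnb deg3[OF aN] bnb finnb by auto
    have sides: "side a b = (\<Union>c\<in>?C. side c a)" using t2 False by (auto simp: side_def)
    show ?thesis
    proof (cases "card ?C = 1")
      case True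
      then obtain c where "?C = {c}" using card_1_singletonE by blast
      then show ?thesis using IH sides by auto
    next
      case False
      then have "card ?C = 2" using cC by simp
      then obtain c1 c2 where C: "?C = {c1,c2}" "c1 \<noteq> c2" by (meson card_2_iff)
      obtain e1 where e1: "class_expr V E (class_bound k) (side c1 a) e1" using IH C(1) by blast
      obtain e2 where e2: "class_expr V E (class_bound k) (side c2 a) e2" using IH C(1) by blast
      have c12: "c1 \<in> tnbrs TE a" "c2 \<in> tnbrs TE a" using C by auto
      have disj: "side c1 a \<inter> side c2 a = {}"
        by (rule side_disjoint[OF tcomp_children_disjoint[OF T c12 C(2)]])
      have U: "side a b = side c1 a \<union> side c2 a" using sides C by auto
      have sub: "side c1 a \<union> side c2 a \<subseteq> V" using side_subset by blast
      have "card (outer_nbrs V E (side a b) ` side a b) \<le> class_bound k" by (rule side_classes[OF e])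
      then have cnt: "card (outer_nbrs V E (side c1 a \<union> side c2 a) ` (side c1 a \<union> side c2 a)) \<le> class_bound k"
        by (simp only: U)
      show ?thesis using combine_class_exprs[OF G disj sub e1 e2 cnt class_bound_pos] U by simp
    qed
  qed
qed

text \<open>The whole vertex set has a class expression: it is one vertex, or the union of the two
  sides of any tree edge.\<close>
lemma vertices_have_class_expr:
  assumes "V \<noteq> {}" shows "\<exists>e. class_expr V E (class_bound k) V e"
proof (cases "TE = {}")
  case True
  have "tleaves N TE \<noteq> {}" using bij assms by (auto simp: bij_betw_def)
  then have "N \<noteq> {}" using leaves_nodes by blast
  then have "card N = 1" using is_treeD(4)[OF T] True by simp
  then obtain r where "N = {r}" using card_1_singletonE by blast
  then have "tleaves N TE = {r}" using \<open>tleaves N TE \<noteq> {}\<close> leaves_nodes by blast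
  then have Vr: "V = {f r}" using bij by (auto simp: bij_betw_def)
  have "class_expr V E (class_bound k) {f r} (CVert (f r) 0)"
    by (rule class_expr_vertex[OF G class_bound_pos])
  then show ?thesis unfolding Vr[symmetric] by blast
next
  case False
  then obtain ed where "ed \<in> TE" by blast
  then obtain a b where "ed = {a,b}" using ok unfolding proper_edges_def by blast
  with \<open>ed \<in> TE\<close> have e: "{a,b} \<in> TE" by simp
  have "tleaves N TE = tleaves N TE \<inter> tcomp TE a b \<union> tleaves N TE \<inter> tcomp TE b a"
    using tcomp_partition(2)[OF T e] leaves_nodes by blast
  then have V: "V = side a b \<union> side b a" using bij by (auto simp: side_def bij_betw_def)
  have disj: "side a b \<inter> side b a = {}" by (rule side_disjoint[OF tcomp_partition(1)[OF T e]])
  obtain e1 where e1: "class_expr V E (class_bound k) (side a b) e1"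
    using side_has_class_expr[OF e] by blast
  have "{b,a} \<in> TE" using e by (simp add: insert_commute)
  then obtain e2 where e2: "class_expr V E (class_bound k) (side b a) e2"
    using side_has_class_expr by blast
  have "outer_nbrs V E V ` V \<subseteq> {{}}" by (auto simp: outer_nbrs_def)
  then have "card (outer_nbrs V E V ` V) \<le> card {{}::'a set}" by (rule card_mono[rotated]) simp
  then have "card (outer_nbrs V E V ` V) \<le> class_bound k" by (simp add: class_bound_def)
  then have cnt: "card (outer_nbrs V E (side a b \<union> side b a) ` (side a b \<union> side b a)) \<le> class_bound k"
    by (simp only: V[symmetric])
  have sub: "side a b \<union> side b a \<subseteq> V" using side_subset by blast
  obtain e where "class_expr V E (class_bound k) (side a b \<union> side b a) e"
    using combine_class_exprs[OF G disj sub e1 e2 cnt class_bound_pos] by blast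
  then show ?thesis unfolding V[symmetric] by blast
qed

lemma cliquewidth_bound: "cliquewidth V E \<le> 3 * class_bound k"
proof (cases "V = {}")
  case False
  then obtain e where "class_expr V E (class_bound k) V e" using vertices_have_class_expr by blast
  moreover have "(\<lambda>x y. x \<in> V \<and> y \<in> V \<and> E x y) = E" using graph_in[OF G] by (auto simp: fun_eq_iff)
  ultimately have "cw_ok (3 * class_bound k) e \<and> cw_verts e = V \<and> cw_edges e = E"
    unfolding class_expr_def by auto
  then have "(LEAST n. \<exists>e. cw_ok n e \<and> cw_verts e = V \<and> cw_edges e = E) \<le> 3 * class_bound k"
    by (intro Least_le) blast
  then show ?thesis using False by (simp add: cliquewidth_def)
qed (simp add: cliquewidth_def)

end

lemma optimal_branch_decomp:
  assumes G: "graph V E"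
  obtains N TE f where "branch_decomp V N TE f" "bd_sm_width V E N TE f = smw V E"
proof -
  let ?P = "\<lambda>w. \<exists>N TE f. branch_decomp V N TE f \<and> bd_sm_width V E N TE f = w"
  obtain N0 TE0 f0 where "branch_decomp V N0 TE0 f0" using exists_branch_decomp[OF G] by blast
  then have "?P (Least ?P)" by (intro LeastI) blast
  then show thesis using that unfolding smw_def by blast
qed

lemma cliquewidth_le_smw_bound:
  assumes G: "graph V E" and k: "smw V E \<le> k"
  shows "cliquewidth V E \<le> 3 * class_bound k"
proof -
  obtain N TE f where bd: "branch_decomp V N TE f" and wd: "bd_sm_width V E N TE f = smw V E"
    using optimal_branch_decomp[OF G] by blast
  have T: "is_tree N TE" using bd by (simp add: branch_decomp_def)
  have "sm V E (f ` (tleaves N TE \<inter> tcomp TE a b)) \<le> k" if e: "{a,b} \<in> TE" for a b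
  proof -
    have "sm V E (f ` (tleaves N TE \<inter> tcomp TE a b)) \<le> bd_sm_width V E N TE f"
      unfolding bd_sm_width_def
      by (rule le_Sup_nat[OF cuts_finite[OF is_treeD(1,2)[OF T]]]) (use e in blast)
    then show ?thesis using wd k by simp
  qed
  then interpret sm_bounded_decomp V E N TE f k using G bd by unfold_locales
  show ?thesis by (rule cliquewidth_bound)
qed

theorem proposition1:
  shows "(\<forall>(V :: 'a set) E. graph V E \<longrightarrow> int (smw V E) \<le> treewidth V E + 1)
     \<and> (\<forall>\<C> :: ('b set \<times> ('b \<Rightarrow> 'b \<Rightarrow> bool)) set.
          (\<forall>(V, E) \<in> \<C>. graph V E) \<longrightarrow> (\<exists>k. \<forall>(V, E) \<in> \<C>. smw V E \<le> k)
          \<longrightarrow> (\<exists>c. \<forall>(V, E) \<in> \<C>. cliquewidth V E \<le> c))"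
proof (intro conjI allI impI)
  fix V :: "'a set" and E assume "graph V E"
  then show "int (smw V E) \<le> treewidth V E + 1" by (rule smw_le_treewidth)
next
  fix \<C> :: "('b set \<times> ('b \<Rightarrow> 'b \<Rightarrow> bool)) set"
  assume G: "\<forall>(V, E) \<in> \<C>. graph V E" and "\<exists>k. \<forall>(V, E) \<in> \<C>. smw V E \<le> k"
  then obtain k where k: "\<forall>(V, E) \<in> \<C>. smw V E \<le> k" by blast
  have "cliquewidth V E \<le> 3 * class_bound k" if "(V, E) \<in> \<C>" for V E
    using G k that by (intro cliquewidth_le_smw_bound) auto
  then show "\<exists>c. \<forall>(V, E) \<in> \<C>. cliquewidth V E \<le> c" by auto
qed

end
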